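(* Let $d\geq 2$ be a fixed odd integer, $c_0\geq 1$ a constant, $C_1=2^{10d}c_0$, $m=m(n)$, $p_1=(\log (mn))^{1/d}/(m^{(d-1)/(2d)}n^{(d-1)/(2d)})$ with $p_1 n\geq p_1 m\geq (\log n)^4$. Then with probability at least $1-n^{-\Omega(1)}$, in $G(m,n,C_1p_1)$ with parts $U,V$, every two distinct vertices of $U$ are connected by at least $2^{10d}c_0\log n$ internally vertex-disjoint paths of length exactly $d+1$.
   Context: $G(m,n,p)$ is the random bipartite graph with parts $U,V$, $|U|=m$, $|V|=n$, each edge between $U$ and $V$ present independently with probability $p$. $\log$ is the logarithm to base $2$; asymptotic notation is as $n\to\infty$. *)

theory Defs
  imports Complex_Main
begin

text \<open>Random bipartite graph G(m,n,p): parts U = {0..<m} (vertices Inl i) and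
  V = {0..<n} (vertices Inr j); the edge set is a subset E of U x V, each pair
  present independently with probability p.\<close>

definition bip_prob :: "nat \<Rightarrow> nat \<Rightarrow> real \<Rightarrow> ((nat \<times> nat) set \<Rightarrow> bool) \<Rightarrow> real" where
  "bip_prob m n p Q =
     (\<Sum>E\<in>Pow ({..<m} \<times> {..<n}).
        if Q E then p ^ card E * (1 - p) ^ (m * n - card E) else 0)"

definition bip_adj :: "(nat \<times> nat) set \<Rightarrow> nat + nat \<Rightarrow> nat + nat \<Rightarrow> bool" where
  "bip_adj E x y \<longleftrightarrow>
     (\<exists>i j. (i, j) \<in> E \<and> ((x = Inl i \<and> y = Inr j) \<or> (x = Inr j \<and> y = Inl i)))"

definition is_path :: "(nat \<times> nat) set \<Rightarrow> nat \<Rightarrow> nat + nat \<Rightarrow> nat + nat \<Rightarrow> (nat + nat) list \<Rightarrow> bool" where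
  "is_path E k x y P \<longleftrightarrow>
     length P = k + 1 \<and> distinct P \<and> hd P = x \<and> last P = y \<and>
     (\<forall>i < k. bip_adj E (P ! i) (P ! Suc i))"

definition internal_vertices :: "'v list \<Rightarrow> 'v set" where
  "internal_vertices P = set (tl (butlast P))"

definition many_disjoint_paths :: "(nat \<times> nat) set \<Rightarrow> nat \<Rightarrow> real \<Rightarrow> nat + nat \<Rightarrow> nat + nat \<Rightarrow> bool" where
  "many_disjoint_paths E k r x y \<longleftrightarrow>
     (\<exists>\<P>. finite \<P> \<and> real (card \<P>) \<ge> r \<and> (\<forall>P\<in>\<P>. is_path E k x y P) \<and>
          (\<forall>P\<in>\<P>. \<forall>Q\<in>\<P>. P \<noteq> Q \<longrightarrow> internal_vertices P \<inter> internal_vertices Q = {}))"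

end

theory Submission
  imports Defs
begin

text \<open>Write \<open>d = 2 k + 1\<close> and cut \<open>U\<close> into \<open>k\<close> and \<open>V\<close> into \<open>k + 1\<close> blocks. With high probability
  every vertex of \<open>U\<close> has at least \<open>g = p N / (8 ln n)\<close> neighbours in each V-block of size \<open>N\<close>,
  and any \<open>t\<close> vertices of one block have at least \<open>min (t g) (N / 2)\<close> neighbours in a next block of
  size \<open>N\<close>. Given \<open>u, u' \<in> U\<close> and a set \<open>S\<close> of \<open>O(log n)\<close> vertices to avoid, a breadth-first
  search from \<open>u\<close> that alternates between the blocks and skips \<open>S\<close> therefore reaches a large last
  U-layer after \<open>2 k - 1\<close> steps, while \<open>u'\<close> has many neighbours in the last V-block. The edges
  between these two sets are independent of the search, and the choice of \<open>p1\<close> makes the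
  probability that none of them is present small enough for a union bound over all \<open>u, u', S\<close>.
  So every \<open>S\<close> is avoided by a path of length \<open>d + 1\<close> from \<open>u\<close> to \<open>u'\<close>, and choosing such paths
  greedily gives \<open>C1 log n\<close> internally disjoint ones.\<close>

section \<open>Random subsets of a finite set\<close>

definition subset_weight :: "'a set \<Rightarrow> real \<Rightarrow> 'a set \<Rightarrow> real" where
  "subset_weight X p E = p ^ card E * (1 - p) ^ (card X - card E)"

definition subset_prob :: "'a set \<Rightarrow> real \<Rightarrow> ('a set \<Rightarrow> bool) \<Rightarrow> real" where
  "subset_prob X p Q = (\<Sum>E\<in>Pow X. if Q E then subset_weight X p E else 0)"

lemma bip_prob_eq_subset_prob: "bip_prob m n p Q = subset_prob ({..<m} \<times> {..<n}) p Q"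
proof -
  have card: "card ({..<m} \<times> {..<n}) = m * n" by (simp add: card_cartesian_product)
  show ?thesis unfolding bip_prob_def subset_prob_def subset_weight_def card ..
qed

lemma sum_Pow_Un_disjoint:
  assumes "finite A" "finite B" "A \<inter> B = {}"
  shows "(\<Sum>E\<in>Pow (A \<union> B). f E) = (\<Sum>E1\<in>Pow A. \<Sum>E2\<in>Pow B. f (E1 \<union> E2))"
proof -
  have img: "Pow (A \<union> B) = (\<lambda>(E1, E2). E1 \<union> E2) ` (Pow A \<times> Pow B)"
  proof (intro equalityI subsetI)
    fix E assume "E \<in> Pow (A \<union> B)"
    then have "E = (E \<inter> A) \<union> (E \<inter> B)" "(E \<inter> A, E \<inter> B) \<in> Pow A \<times> Pow B" by auto
    then show "E \<in> (\<lambda>(E1, E2). E1 \<union> E2) ` (Pow A \<times> Pow B)"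
      by (metis (no_types, lifting) case_prod_conv image_eqI)
  qed auto
  have inj: "inj_on (\<lambda>(E1, E2). E1 \<union> E2) (Pow A \<times> Pow B)"
  proof (rule inj_onI, clarify)
    fix E1 E2 F1 F2 assume "E1 \<subseteq> A" "E2 \<subseteq> B" "F1 \<subseteq> A" "F2 \<subseteq> B" "E1 \<union> E2 = F1 \<union> F2"
    then show "E1 = F1 \<and> E2 = F2" using assms(3) by blast
  qed
  show ?thesis
    unfolding img sum.reindex[OF inj] comp_def by (subst sum.cartesian_product) (simp add: split_def)
qed

lemma subset_weight_Un:
  assumes "finite A" "finite B" "A \<inter> B = {}" "E1 \<subseteq> A" "E2 \<subseteq> B"
  shows "subset_weight (A \<union> B) p (E1 \<union> E2) = subset_weight A p E1 * subset_weight B p E2"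
proof -
  have "finite E1" "finite E2" "E1 \<inter> E2 = {}" using assms by (auto intro: finite_subset)
  then have c1: "card (E1 \<union> E2) = card E1 + card E2" by (rule card_Un_disjoint)
  have c2: "card (A \<union> B) = card A + card B" using card_Un_disjoint[OF assms(1-3)] .
  have "card E1 \<le> card A" "card E2 \<le> card B" using assms by (auto intro!: card_mono)
  then have "card (A \<union> B) - card (E1 \<union> E2) = (card A - card E1) + (card B - card E2)"
    using c1 c2 by simp
  then show ?thesis unfolding subset_weight_def c1 by (simp add: power_add algebra_simps)
qed

lemma subset_prob_split:
  assumes "finite X" "D \<subseteq> X"
  shows "subset_prob X p Q
    = (\<Sum>E1\<in>Pow (X - D). subset_weight (X - D) p E1 * subset_prob D p (\<lambda>E2. Q (E1 \<union> E2)))"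
proof -
  have X: "(X - D) \<union> D = X" using assms by blast
  have fin: "finite D" "finite (X - D)" using assms by (auto intro: finite_subset)
  have "subset_prob X p Q
      = (\<Sum>E\<in>Pow ((X - D) \<union> D). if Q E then subset_weight ((X - D) \<union> D) p E else 0)"
    unfolding subset_prob_def X ..
  also have "\<dots> = (\<Sum>E1\<in>Pow (X - D). \<Sum>E2\<in>Pow D.
      if Q (E1 \<union> E2) then subset_weight ((X - D) \<union> D) p (E1 \<union> E2) else 0)"
    by (rule sum_Pow_Un_disjoint) (use fin in auto)
  also have "\<dots> = (\<Sum>E1\<in>Pow (X - D). \<Sum>E2\<in>Pow D.
      subset_weight (X - D) p E1 * (if Q (E1 \<union> E2) then subset_weight D p E2 else 0))"
    by (intro sum.cong refl, subst subset_weight_Un) (use fin in auto)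
  finally show ?thesis by (simp add: subset_prob_def sum_distrib_left)
qed

lemma subset_prob_True:
  assumes "finite X"
  shows "subset_prob X p (\<lambda>_. True) = 1"
  using assms
proof (induction X rule: finite_induct)
  case empty
  then show ?case by (simp add: subset_prob_def subset_weight_def)
next
  case (insert x X)
  have "Pow {x} = {{}, {x}}" by auto
  then have single: "subset_prob {x} p (\<lambda>_. True) = 1" by (simp add: subset_prob_def subset_weight_def)
  have "insert x X - {x} = X" using insert by auto
  then show ?case
    using subset_prob_split[of "insert x X" "{x}" p "\<lambda>_. True"] insert single
    by (simp add: subset_prob_def)
qed

lemma subset_weight_nonneg: "0 \<le> p \<Longrightarrow> p \<le> 1 \<Longrightarrow> 0 \<le> subset_weight X p E"
  unfolding subset_weight_def by simp

lemma subset_prob_mono: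
  assumes "0 \<le> p" "p \<le> 1" "\<And>E. E \<subseteq> X \<Longrightarrow> Q E \<Longrightarrow> R E"
  shows "subset_prob X p Q \<le> subset_prob X p R"
  unfolding subset_prob_def by (intro sum_mono) (use assms in \<open>auto simp: subset_weight_nonneg\<close>)

lemma subset_prob_not:
  assumes "finite X"
  shows "subset_prob X p Q = 1 - subset_prob X p (\<lambda>E. \<not> Q E)"
proof -
  have "subset_prob X p Q + subset_prob X p (\<lambda>E. \<not> Q E) = subset_prob X p (\<lambda>_. True)"
    unfolding subset_prob_def by (simp add: sum.distrib[symmetric]) (intro sum.cong, auto)
  then show ?thesis using subset_prob_True[OF assms] by simp
qed

lemma subset_prob_disj_le:
  assumes "0 \<le> p" "p \<le> 1"
  shows "subset_prob X p (\<lambda>E. Q E \<or> R E) \<le> subset_prob X p Q + subset_prob X p R"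
  unfolding subset_prob_def
  by (simp add: sum.distrib[symmetric]) (intro sum_mono, auto simp: subset_weight_nonneg assms)

lemma subset_prob_Bex_le:
  assumes "0 \<le> p" "p \<le> 1" "finite I"
  shows "subset_prob X p (\<lambda>E. \<exists>i\<in>I. Q i E) \<le> (\<Sum>i\<in>I. subset_prob X p (Q i))"
  using assms(3)
proof (induction I rule: finite_induct)
  case empty
  then show ?case by (simp add: subset_prob_def)
next
  case (insert i I)
  then show ?case
    using subset_prob_disj_le[OF assms(1,2), of X "Q i" "\<lambda>E. \<exists>j\<in>I. Q j E"] by simp
qed

lemma subset_prob_disjoint:
  assumes "finite X" "F \<subseteq> X"
  shows "subset_prob X p (\<lambda>E. E \<inter> F = {}) = (1 - p) ^ card F"
proof -
  have fin: "finite F" using assms by (auto intro: finite_subset)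
  have inner: "subset_prob F p (\<lambda>E2. (E1 \<union> E2) \<inter> F = {}) = (1 - p) ^ card F"
    if "E1 \<subseteq> X - F" for E1
  proof -
    have "subset_prob F p (\<lambda>E2. (E1 \<union> E2) \<inter> F = {})
        = (\<Sum>E\<in>Pow F. if E = {} then subset_weight F p E else 0)"
      unfolding subset_prob_def using that by (intro sum.cong) auto
    also have "\<dots> = subset_weight F p {}" by (subst sum.delta) (auto simp: fin)
    finally show ?thesis by (simp add: subset_weight_def)
  qed
  have "subset_prob X p (\<lambda>E. E \<inter> F = {})
      = (\<Sum>E1\<in>Pow (X - F). subset_weight (X - F) p E1 * (1 - p) ^ card F)"
    by (subst subset_prob_split[OF assms]) (intro sum.cong; simp add: inner)
  also have "\<dots> = subset_prob (X - F) p (\<lambda>_. True) * (1 - p) ^ card F"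
    unfolding subset_prob_def by (simp add: sum_distrib_right)
  finally show ?thesis using subset_prob_True[of "X - F" p] assms by simp
qed

text \<open>The set \<open>f (E - D) \<subseteq> D\<close> is determined by the part of \<open>E\<close> outside \<open>D\<close>, which is independent
  of the part inside \<open>D\<close>.\<close>

lemma subset_prob_conditional_disjoint_le:
  assumes "finite X" "D \<subseteq> X" "0 \<le> p" "p \<le> 1"
    and f: "\<And>E1. E1 \<subseteq> X - D \<Longrightarrow> c E1 \<Longrightarrow> f E1 \<subseteq> D \<and> K \<le> card (f E1)"
  shows "subset_prob X p (\<lambda>E. c (E - D) \<and> E \<inter> f (E - D) = {}) \<le> (1 - p) ^ K"
proof -
  have fin: "finite D" using assms by (auto intro: finite_subset)
  have inner: "subset_prob D p (\<lambda>E2. c ((E1 \<union> E2) - D) \<and> (E1 \<union> E2) \<inter> f ((E1 \<union> E2) - D) = {})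
      \<le> (1 - p) ^ K" if E1: "E1 \<subseteq> X - D" for E1
  proof -
    have eq: "(E1 \<union> E2) - D = E1" if "E2 \<subseteq> D" for E2 using that E1 by blast
    show ?thesis
    proof (cases "c E1")
      case True
      then have fs: "f E1 \<subseteq> D" "K \<le> card (f E1)" using f[OF E1] by auto
      have "subset_prob D p (\<lambda>E2. c ((E1 \<union> E2) - D) \<and> (E1 \<union> E2) \<inter> f ((E1 \<union> E2) - D) = {})
          = subset_prob D p (\<lambda>E2. E2 \<inter> f E1 = {})"
        unfolding subset_prob_def using True fs E1 by (intro sum.cong refl) (auto simp: eq)
      also have "\<dots> = (1 - p) ^ card (f E1)" by (rule subset_prob_disjoint[OF fin fs(1)])
      also have "\<dots> \<le> (1 - p) ^ K" using fs assms by (intro power_decreasing) auto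
      finally show ?thesis .
    next
      case False
      then have "subset_prob D p (\<lambda>E2. c ((E1 \<union> E2) - D) \<and> (E1 \<union> E2) \<inter> f ((E1 \<union> E2) - D) = {}) = 0"
        unfolding subset_prob_def by (intro sum.neutral) (auto simp: eq)
      then show ?thesis using assms by simp
    qed
  qed
  have "subset_prob X p (\<lambda>E. c (E - D) \<and> E \<inter> f (E - D) = {})
      \<le> (\<Sum>E1\<in>Pow (X - D). subset_weight (X - D) p E1 * (1 - p) ^ K)"
    by (subst subset_prob_split[OF assms(1,2)])
      (intro sum_mono mult_left_mono inner; auto simp: subset_weight_nonneg assms)
  also have "\<dots> = subset_prob (X - D) p (\<lambda>_. True) * (1 - p) ^ K"
    unfolding subset_prob_def by (simp add: sum_distrib_right)
  finally show ?thesis using subset_prob_True[of "X - D" p] assms by simp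
qed

text \<open>The edge between \<open>x \<in> A\<close> and \<open>y \<in> Q\<close> is encoded as \<open>pair x y\<close>, so that the same notion covers
  neighbourhoods in \<open>V\<close> (\<open>pair = Pair\<close>) and in \<open>U\<close> (\<open>pair = rev_pair\<close>).\<close>

definition nbhd :: "('a \<Rightarrow> 'b \<Rightarrow> 'c) \<Rightarrow> 'c set \<Rightarrow> 'a set \<Rightarrow> 'b set \<Rightarrow> 'b set" where
  "nbhd pair E A Q = {y\<in>Q. \<exists>x\<in>A. pair x y \<in> E}"

lemma nbhd_mono: "A \<subseteq> B \<Longrightarrow> nbhd pair E A Q \<subseteq> nbhd pair E B Q"
  unfolding nbhd_def by blast

lemma nbhd_subset: "nbhd pair E A Q \<subseteq> Q"
  unfolding nbhd_def by blast

lemma nbhd_Diff_eq: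
  assumes "\<And>x y. x \<in> A \<Longrightarrow> y \<in> Q \<Longrightarrow> pair x y \<notin> D"
  shows "nbhd pair (E - D) A Q = nbhd pair E A Q"
  using assms unfolding nbhd_def by blast

lemma binomial_le_power: "n choose k \<le> n ^ k"
  by (cases "k \<le> n") (auto simp: binomial_le_pow binomial_eq_0)

text \<open>Union bound over the \<open>t\<close>-subsets \<open>A\<close> of \<open>P\<close> and the sets of \<open>card Q - t'\<close> non-neighbours
  of \<open>A\<close>.\<close>

lemma subset_prob_small_nbhd_le:
  assumes X: "finite X" and P: "finite P" and Q: "finite Q"
    and pair: "\<And>x y. x \<in> P \<Longrightarrow> y \<in> Q \<Longrightarrow> pair x y \<in> X"
    and inj: "\<And>x y x' y'. pair x y = pair x' y' \<Longrightarrow> x = x' \<and> y = y'"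
    and t': "t' \<le> card Q" and p: "0 \<le> p" "p \<le> 1"
  shows "subset_prob X p (\<lambda>E. \<exists>A. A \<subseteq> P \<and> card A = t \<and> card (nbhd pair E A Q) < t')
     \<le> real (card P) ^ t * real (card Q) ^ t' * (1 - p) ^ (t * (card Q - t'))"
proof -
  define I where "I = {A. A \<subseteq> P \<and> card A = t} \<times> {F. F \<subseteq> Q \<and> card F = card Q - t'}"
  define missed where "missed = (\<lambda>(A, F) E. E \<inter> (\<lambda>(x, y). pair x y) ` (A \<times> F) = {})"
  have "subset_prob X p (\<lambda>E. \<exists>A. A \<subseteq> P \<and> card A = t \<and> card (nbhd pair E A Q) < t')
      \<le> subset_prob X p (\<lambda>E. \<exists>AF\<in>I. missed AF E)"
  proof (rule subset_prob_mono[OF p])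
    fix E assume "\<exists>A. A \<subseteq> P \<and> card A = t \<and> card (nbhd pair E A Q) < t'"
    then obtain A where A: "A \<subseteq> P" "card A = t" "card (nbhd pair E A Q) < t'" by blast
    have "finite (nbhd pair E A Q)" using finite_subset[OF nbhd_subset Q] .
    then have "card (Q - nbhd pair E A Q) = card Q - card (nbhd pair E A Q)"
      by (rule card_Diff_subset[OF _ nbhd_subset])
    then have "card Q - t' \<le> card (Q - nbhd pair E A Q)" using A(3) by simp
    then obtain F where F: "F \<subseteq> Q - nbhd pair E A Q" "card F = card Q - t'"
      using obtain_subset_with_card_n by metis
    then have "(A, F) \<in> I" "missed (A, F) E"
      using A unfolding I_def missed_def nbhd_def by fastforce+
    then show "\<exists>AF\<in>I. missed AF E" by blast
  qed
  also have "\<dots> \<le> (\<Sum>AF\<in>I. subset_prob X p (missed AF))"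
    by (rule subset_prob_Bex_le[OF p]) (use P Q in \<open>simp add: I_def\<close>)
  also have "\<dots> = (\<Sum>AF\<in>I. (1 - p) ^ (t * (card Q - t')))"
  proof (rule sum.cong[OF refl])
    fix AF assume "AF \<in> I"
    then obtain A F where AF: "AF = (A, F)" "A \<subseteq> P" "card A = t" "F \<subseteq> Q" "card F = card Q - t'"
      unfolding I_def by auto
    have sub: "(\<lambda>(x, y). pair x y) ` (A \<times> F) \<subseteq> X" using AF by (force intro!: pair)
    have "inj_on (\<lambda>(x, y). pair x y) (A \<times> F)" by (rule inj_onI) (auto dest: inj)
    then have "card ((\<lambda>(x, y). pair x y) ` (A \<times> F)) = t * (card Q - t')"
      using AF by (simp add: card_image card_cartesian_product)
    then show "subset_prob X p (missed AF) = (1 - p) ^ (t * (card Q - t'))"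
      unfolding missed_def using subset_prob_disjoint[OF X sub] AF by simp
  qed
  also have "\<dots> \<le> real (card P) ^ t * real (card Q) ^ t' * (1 - p) ^ (t * (card Q - t'))"
  proof (simp, rule mult_right_mono)
    have "card I = (card P choose t) * (card Q choose t')"
      unfolding I_def using P Q t'
      by (simp add: card_cartesian_product n_subsets binomial_symmetric[symmetric])
    then have "card I \<le> card P ^ t * card Q ^ t'"
      by (metis mult_le_mono binomial_le_power)
    then show "real (card I) \<le> real (card P) ^ t * real (card Q) ^ t'"
      by (metis of_nat_le_iff of_nat_mult of_nat_power)
  qed (use p in simp)
  finally show ?thesis .
qed

section \<open>Layered breadth-first search\<close>

text \<open>Both parts are cut into blocks of consecutive vertices; a path from \<open>u\<close> of length
  \<open>2 k + 2\<close> takes its \<open>j\<close>-th internal vertex from V-block \<open>j div 2\<close> (\<open>j\<close> even) or from U-block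
  \<open>j div 2\<close> (\<open>j\<close> odd), and its last internal vertex from V-block \<open>k\<close>.\<close>

definition block :: "nat \<Rightarrow> nat \<Rightarrow> nat set" where
  "block N i = {i * N..<Suc i * N}"

definition rev_pair :: "nat \<Rightarrow> nat \<Rightarrow> nat \<times> nat" where
  "rev_pair x y = (y, x)"

primrec reach ::
  "(nat \<times> nat) set \<Rightarrow> nat \<Rightarrow> nat \<Rightarrow> nat \<Rightarrow> nat set \<Rightarrow> nat set \<Rightarrow> nat \<Rightarrow> nat set" where
  "reach E NU NV u SU SV 0 = nbhd Pair E {u} (block NV 0) - SV"
| "reach E NU NV u SU SV (Suc j) =
     (if even j then nbhd rev_pair E (reach E NU NV u SU SV j) (block NU (j div 2)) - SU
      else nbhd Pair E (reach E NU NV u SU SV j) (block NV (Suc j div 2)) - SV)"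

definition layer_block :: "nat \<Rightarrow> nat \<Rightarrow> nat \<Rightarrow> nat set" where
  "layer_block NU NV j = (if even j then block NV (j div 2) else block NU (j div 2))"

definition next_block :: "nat \<Rightarrow> nat \<Rightarrow> nat \<Rightarrow> nat set" where
  "next_block NU NV j = (if even j then block NU (j div 2) else block NV (Suc j div 2))"

definition step_pair :: "nat \<Rightarrow> nat \<Rightarrow> nat \<Rightarrow> nat \<times> nat" where
  "step_pair j = (if even j then rev_pair else Pair)"

definition layer_vertex :: "nat \<Rightarrow> nat \<Rightarrow> nat + nat" where
  "layer_vertex j x = (if even j then Inr x else Inl x)"

definition layer :: "nat \<Rightarrow> nat \<Rightarrow> nat \<Rightarrow> (nat + nat) set" where
  "layer NU NV j = layer_vertex j ` layer_block NU NV j"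

lemma finite_block [simp]: "finite (block N i)"
  by (simp add: block_def)

lemma card_block [simp]: "card (block N i) = N"
  by (simp add: block_def)

lemma block_disjoint:
  assumes "i \<noteq> i'"
  shows "block N i \<inter> block N i' = {}"
proof (rule ccontr)
  assume "block N i \<inter> block N i' \<noteq> {}"
  then obtain x where "x \<in> block N i" "x \<in> block N i'" by blast
  then have x: "i * N \<le> x" "x < Suc i * N" "i' * N \<le> x" "x < Suc i' * N"
    unfolding block_def by auto
  show False
  proof (cases "i < i'")
    case True
    then have "Suc i * N \<le> i' * N" by (intro mult_le_mono1) simp
    then show False using x by linarith
  next
    case False
    then have "Suc i' * N \<le> i * N" using assms by (intro mult_le_mono1) simp
    then show False using x by linarith
  qed
qed

lemma block_subset_lessThan:
  assumes "i < K" "N * K \<le> M"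
  shows "block N i \<subseteq> {..<M}"
proof -
  have "Suc i * N \<le> K * N" using assms(1) by (intro mult_le_mono1) simp
  then show ?thesis using assms(2) by (auto simp: block_def mult.commute)
qed

lemma layer_disjoint:
  assumes "i \<noteq> i'"
  shows "layer NU NV i \<inter> layer NU NV i' = {}"
proof -
  have "i div 2 \<noteq> i' div 2" if "even i = even i'"
    using that assms by (metis div_mult_mod_eq even_iff_mod_2_eq_zero odd_iff_mod_2_eq_one)
  then show ?thesis
    using block_disjoint
    by (auto simp: layer_def layer_block_def layer_vertex_def image_iff split: if_splits)
qed

lemma reach_subset:
  "reach E NU NV u SU SV j \<subseteq> layer_block NU NV j - (if even j then SV else SU)"
  by (cases j) (auto simp: nbhd_def layer_block_def)

lemma reach_Suc_eq:
  "reach E NU NV u SU SV (Suc j)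
    = nbhd (step_pair j) E (reach E NU NV u SU SV j) (next_block NU NV j) - (if even j then SU else SV)"
  by (simp add: step_pair_def next_block_def)

lemma finite_reach: "finite (reach E NU NV u SU SV j)"
  using reach_subset[of E NU NV u SU SV j] by (rule finite_subset) (simp add: layer_block_def)

lemma reach_Diff_eq:
  assumes "D \<subseteq> UNIV \<times> block NV k" "j \<le> 2 * k - 1" "1 \<le> k"
  shows "reach (E - D) NU NV u SU SV j = reach E NU NV u SU SV j"
  using assms(2)
proof (induction j)
  case 0
  have "block NV 0 \<inter> block NV k = {}" using assms(3) block_disjoint by simp
  then have "nbhd Pair (E - D) {u} (block NV 0) = nbhd Pair E {u} (block NV 0)"
    using assms(1) by (intro nbhd_Diff_eq) auto
  then show ?case by simp
next
  case (Suc j)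
  then have IH: "reach (E - D) NU NV u SU SV j = reach E NU NV u SU SV j" by simp
  show ?case
  proof (cases "even j")
    case True
    have "j div 2 \<noteq> k" using Suc.prems by linarith
    then have disj: "block NV (j div 2) \<inter> block NV k = {}" using block_disjoint by simp
    have "nbhd rev_pair (E - D) (reach E NU NV u SU SV j) (block NU (j div 2))
        = nbhd rev_pair E (reach E NU NV u SU SV j) (block NU (j div 2))"
    proof (rule nbhd_Diff_eq)
      fix x y assume "x \<in> reach E NU NV u SU SV j"
      then have "x \<in> block NV (j div 2)" using reach_subset[of E NU NV u SU SV j] True
        by (auto simp: layer_block_def)
      then show "rev_pair x y \<notin> D" using assms(1) disj by (auto simp: rev_pair_def)
    qed
    then show ?thesis using IH True by simp
  next
    case False
    have "Suc j div 2 \<noteq> k" using Suc.prems False by presburger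
    then have disj: "block NV (Suc j div 2) \<inter> block NV k = {}" using block_disjoint by simp
    have "nbhd Pair (E - D) (reach E NU NV u SU SV j) (block NV (Suc j div 2))
        = nbhd Pair E (reach E NU NV u SU SV j) (block NV (Suc j div 2))"
      using assms(1) disj by (intro nbhd_Diff_eq) auto
    then show ?thesis using IH False by simp
  qed
qed

lemma reach_imp_walk:
  "x \<in> reach E NU NV u SU SV j \<Longrightarrow>
   \<exists>Ls. length Ls = Suc j \<and> last Ls = layer_vertex j x \<and>
     (\<forall>i<Suc j. Ls ! i \<in> layer NU NV i \<and> Ls ! i \<notin> Inl ` SU \<union> Inr ` SV) \<and>
     successively (bip_adj E) (Inl u # Ls)"
proof (induction j arbitrary: x)
  case 0
  then have "x \<in> block NV 0" "x \<notin> SV" "(u, x) \<in> E" by (auto simp: nbhd_def)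
  then show ?case
    by (intro exI[of _ "[layer_vertex 0 x]"])
      (auto simp: layer_vertex_def layer_def layer_block_def bip_adj_def)
next
  case (Suc j)
  obtain y where y: "y \<in> reach E NU NV u SU SV j" "step_pair j y x \<in> E"
    and x: "x \<in> next_block NU NV j" "x \<notin> (if even j then SU else SV)"
    using Suc.prems[unfolded reach_Suc_eq] by (auto simp: nbhd_def)
  from Suc.IH[OF y(1)] obtain Ls where Ls: "length Ls = Suc j" "last Ls = layer_vertex j y"
    "\<forall>i<Suc j. Ls ! i \<in> layer NU NV i \<and> Ls ! i \<notin> Inl ` SU \<union> Inr ` SV"
    "successively (bip_adj E) (Inl u # Ls)" by blast
  define z where "z = layer_vertex (Suc j) x"
  have "bip_adj E (layer_vertex j y) z"
    using y(2) by (cases "even j") (auto simp: bip_adj_def layer_vertex_def step_pair_def rev_pair_def z_def)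
  moreover have "last (Inl u # Ls) = layer_vertex j y" using Ls(1,2) by (cases Ls) auto
  ultimately have "successively (bip_adj E) ((Inl u # Ls) @ [z])"
    using Ls(4) by (simp only: successively_append_iff) simp
  moreover have z: "z \<in> layer NU NV (Suc j)" "z \<notin> Inl ` SU \<union> Inr ` SV"
  proof -
    have "even j \<Longrightarrow> Suc j div 2 = j div 2" by presburger
    then have "next_block NU NV j = layer_block NU NV (Suc j)"
      by (simp add: next_block_def layer_block_def)
    then show "z \<in> layer NU NV (Suc j)" using x(1) by (simp add: layer_def z_def)
    show "z \<notin> Inl ` SU \<union> Inr ` SV"
      using x(2) by (cases "even j") (auto simp: layer_vertex_def z_def)
  qed
  moreover have "\<forall>i<Suc (Suc j). (Ls @ [z]) ! i \<in> layer NU NV i \<and> (Ls @ [z]) ! i \<notin> Inl ` SU \<union> Inr ` SV"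
  proof (intro allI impI)
    fix i assume "i < Suc (Suc j)"
    then consider "i < Suc j" | "i = Suc j" by linarith
    then show "(Ls @ [z]) ! i \<in> layer NU NV i \<and> (Ls @ [z]) ! i \<notin> Inl ` SU \<union> Inr ` SV"
      by cases (use Ls(1,3) z in \<open>simp_all add: nth_append\<close>)
  qed
  ultimately show ?case using Ls(1) by (intro exI[of _ "Ls @ [z]"]) (simp add: z_def)
qed

lemma internal_vertices_subset: "internal_vertices P \<subseteq> set P"
proof -
  have "set (tl xs) \<subseteq> set xs" for xs :: "'a list" by (cases xs) auto
  moreover have "set (butlast P) \<subseteq> set P" by (auto dest: in_set_butlastD)
  ultimately show ?thesis unfolding internal_vertices_def by blast
qed

lemma card_internal_vertices_le:
  assumes "is_path E k x y P"
  shows "card (internal_vertices P) \<le> k - 1"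
proof -
  have "card (internal_vertices P) \<le> length (tl (butlast P))"
    unfolding internal_vertices_def by (rule card_length)
  then show ?thesis using assms by (simp add: is_path_def)
qed

lemma internal_vertices_nonempty:
  assumes "is_path E k x y P" "2 \<le> k"
  shows "internal_vertices P \<noteq> {}"
proof -
  have "length (tl (butlast P)) = k - 1" using assms by (simp add: is_path_def)
  then have "0 < length (tl (butlast P))" using assms(2) by linarith
  then have "tl (butlast P) \<noteq> []" by blast
  then show ?thesis unfolding internal_vertices_def by simp
qed

lemma reach_imp_path:
  assumes k: "1 \<le> k" and w: "w \<in> reach E NU NV u SU SV (2 * k - 1)"
    and v: "v \<in> block NV k" "v \<notin> SV" and e: "(w, v) \<in> E" "(u', v) \<in> E"
    and uu: "u \<in> SU" "u' \<in> SU" "u \<noteq> u'"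
  shows "\<exists>P. is_path E (2 * k + 2) (Inl u) (Inl u') P \<and>
    internal_vertices P \<inter> (Inl ` SU \<union> Inr ` SV) = {}"
proof -
  have "odd (2 * k - 1)" "Suc (2 * k - 1) = 2 * k" using k by presburger+
  then obtain Ls where Ls: "length Ls = 2 * k" "last Ls = Inl w"
      "\<forall>i<2 * k. Ls ! i \<in> layer NU NV i \<and> Ls ! i \<notin> Inl ` SU \<union> Inr ` SV"
      "successively (bip_adj E) (Inl u # Ls)"
    using reach_imp_walk[OF w] by (auto simp: layer_vertex_def)
  define P where "P = Inl u # Ls @ [Inr v, Inl u']"
  have ne: "Ls \<noteq> []" using Ls(1) k by auto
  have "distinct Ls"
    unfolding distinct_conv_nth
  proof (intro allI impI)
    fix i j assume "i < length Ls" "j < length Ls" "i \<noteq> j"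
    then show "Ls ! i \<noteq> Ls ! j" using Ls(1,3) layer_disjoint[of i j NU NV] by auto
  qed
  have notS: "z \<notin> Inl ` SU \<union> Inr ` SV" if "z \<in> set Ls" for z
    using that Ls(1,3) by (auto simp: in_set_conv_nth)
  have "Inr v \<notin> set Ls"
  proof
    assume "Inr v \<in> set Ls"
    then obtain i where i: "i < 2 * k" "Ls ! i = Inr v" using Ls(1) by (auto simp: in_set_conv_nth)
    then have "Inr v \<in> layer NU NV i" using Ls(3) by metis
    then have "v \<in> block NV (i div 2)"
      by (auto simp: layer_def layer_vertex_def layer_block_def split: if_splits)
    moreover have "i div 2 \<noteq> k" using i(1) by linarith
    ultimately show False using block_disjoint v(1) by blast
  qed
  then have "distinct P" unfolding P_def using \<open>distinct Ls\<close> notS uu by auto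
  moreover have len: "length P = 2 * k + 2 + 1" unfolding P_def using Ls(1) by simp
  moreover have "hd P = Inl u" "last P = Inl u'" unfolding P_def by auto
  moreover have "successively (bip_adj E) P"
  proof -
    have "last (Inl u # Ls) = Inl w" using Ls(2) ne by simp
    then have "successively (bip_adj E) ((Inl u # Ls) @ [Inr v, Inl u'])"
      using Ls(4) e by (subst successively_append_iff) (auto simp: bip_adj_def)
    then show ?thesis unfolding P_def by simp
  qed
  then have "\<forall>i < 2 * k + 2. bip_adj E (P ! i) (P ! Suc i)"
    using successively_nth len by fastforce
  moreover have "internal_vertices P = set Ls \<union> {Inr v}"
    unfolding P_def internal_vertices_def by (simp add: butlast_append)
  moreover have "(set Ls \<union> {Inr v}) \<inter> (Inl ` SU \<union> Inr ` SV) = {}"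
    using notS v(2) by blast
  ultimately show ?thesis by (intro exI[of _ P]) (auto simp: is_path_def)
qed

text \<open>Each new path avoids the at most \<open>d * j\<close> interior vertices of the \<open>j\<close> paths chosen before.\<close>

lemma disjoint_paths_greedy:
  assumes avoid: "\<And>S. finite S \<Longrightarrow> card S \<le> d * j0 \<Longrightarrow>
      \<exists>P. is_path E (d + 1) x y P \<and> internal_vertices P \<inter> S = {}"
    and d: "1 \<le> d" and j: "j \<le> Suc j0"
  shows "\<exists>\<P>. finite \<P> \<and> card \<P> = j \<and> (\<forall>P\<in>\<P>. is_path E (d + 1) x y P) \<and>
          (\<forall>P\<in>\<P>. \<forall>Q\<in>\<P>. P \<noteq> Q \<longrightarrow> internal_vertices P \<inter> internal_vertices Q = {})"
  using j
proof (induction j)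
  case 0
  then show ?case by (intro exI[of _ "{}"]) auto
next
  case (Suc j)
  then obtain \<P> where F: "finite \<P>" "card \<P> = j" "\<forall>P\<in>\<P>. is_path E (d + 1) x y P"
    "\<forall>P\<in>\<P>. \<forall>Q\<in>\<P>. P \<noteq> Q \<longrightarrow> internal_vertices P \<inter> internal_vertices Q = {}" by auto
  define S where "S = \<Union> (internal_vertices ` \<P>)"
  have "finite S" unfolding S_def internal_vertices_def using F(1) by auto
  have "card S \<le> (\<Sum>P\<in>\<P>. card (internal_vertices P))" unfolding S_def by (rule card_UN_le[OF F(1)])
  also have "\<dots> \<le> (\<Sum>P\<in>\<P>. d)" using F(3) card_internal_vertices_le by (intro sum_mono) fastforce
  also have "\<dots> \<le> d * j0" using F(2) Suc.prems by simp
  finally obtain P where P: "is_path E (d + 1) x y P" "internal_vertices P \<inter> S = {}"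
    using avoid \<open>finite S\<close> by blast
  have "P \<notin> \<P>"
  proof
    assume "P \<in> \<P>"
    then have "internal_vertices P \<subseteq> S" unfolding S_def by auto
    then show False using P internal_vertices_nonempty[OF P(1)] d by auto
  qed
  show ?case
  proof (intro exI[of _ "insert P \<P>"] conjI)
    show "card (insert P \<P>) = Suc j" using F \<open>P \<notin> \<P>\<close> by simp
    show "\<forall>Q\<in>insert P \<P>. \<forall>R\<in>insert P \<P>. Q \<noteq> R \<longrightarrow> internal_vertices Q \<inter> internal_vertices R = {}"
      using F(4) P(2) unfolding S_def by blast
  qed (use F P in auto)
qed

lemma path_vertex_range:
  assumes "is_path E k x y P" "1 \<le> k" "E \<subseteq> {..<m} \<times> {..<n}" "z \<in> set P"
  shows "z \<in> Inl ` {..<m} \<union> Inr ` {..<n}"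
proof -
  obtain i where i: "i < k + 1" "z = P ! i"
    using assms(1,4) by (auto simp: in_set_conv_nth is_path_def)
  have adj: "\<forall>i<k. bip_adj E (P ! i) (P ! Suc i)" using assms(1) by (simp add: is_path_def)
  have "\<exists>w. bip_adj E z w \<or> bip_adj E w z"
  proof (cases "i < k")
    case True then show ?thesis using adj i by blast
  next
    case False
    then have "i = Suc (k - 1)" "k - 1 < k" using i assms(2) by auto
    then show ?thesis using adj i by metis
  qed
  then show ?thesis using assms(3) unfolding bip_adj_def by blast
qed

section \<open>The good events and the union bound\<close>

definition min_degree_into :: "(nat \<times> nat) set \<Rightarrow> nat \<Rightarrow> nat set \<Rightarrow> nat \<Rightarrow> bool" where
  "min_degree_into E m Q t \<longleftrightarrow> (\<forall>u<m. t \<le> card (nbhd Pair E {u} Q))"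

definition expands :: "(nat \<times> nat) set \<Rightarrow> nat \<Rightarrow> nat \<Rightarrow> nat \<Rightarrow> nat \<Rightarrow> nat \<Rightarrow> bool" where
  "expands E NU NV j t t' \<longleftrightarrow>
     (\<forall>A. A \<subseteq> layer_block NU NV j \<and> card A = t \<longrightarrow>
        t' \<le> card (nbhd (step_pair j) E A (next_block NU NV j)))"

lemma reach_card_ge:
  assumes deg: "min_degree_into E m (block NV 0) \<tau>0" and u: "u < m"
    and exp: "\<forall>j<J. expands E NU NV j (\<sigma> j) (\<tau> j)"
    and S: "finite SU" "finite SV" "card SU \<le> s" "card SV \<le> s"
    and \<sigma>0: "\<sigma> 0 + s \<le> \<tau>0" and \<sigma>Suc: "\<forall>j. \<sigma> (Suc j) + s \<le> \<tau> j"
  shows "j \<le> J \<Longrightarrow> \<sigma> j \<le> card (reach E NU NV u SU SV j)"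
proof (induction j)
  case 0
  have "\<tau>0 \<le> card (nbhd Pair E {u} (block NV 0))" using deg u unfolding min_degree_into_def by auto
  moreover have "card (nbhd Pair E {u} (block NV 0)) - card SV \<le> card (nbhd Pair E {u} (block NV 0) - SV)"
    by (rule diff_card_le_card_Diff[OF S(2)])
  ultimately show ?case using \<sigma>0 S by simp
next
  case (Suc j)
  then have j: "j < J" "\<sigma> j \<le> card (reach E NU NV u SU SV j)" by auto
  obtain A where A: "A \<subseteq> reach E NU NV u SU SV j" "card A = \<sigma> j"
    using obtain_subset_with_card_n[OF j(2)] by metis
  have "A \<subseteq> layer_block NU NV j" using A(1) reach_subset by blast
  then have t: "\<tau> j \<le> card (nbhd (step_pair j) E A (next_block NU NV j))"
    using exp j(1) A(2) unfolding expands_def by auto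
  define S' where "S' = (if even j then SU else SV)"
  have S': "finite S'" "card S' \<le> s" unfolding S'_def using S by auto
  have "card (nbhd (step_pair j) E A (next_block NU NV j)) - card S'
      \<le> card (nbhd (step_pair j) E A (next_block NU NV j) - S')"
    by (rule diff_card_le_card_Diff[OF S'(1)])
  also have "\<dots> \<le> card (reach E NU NV u SU SV (Suc j))"
  proof (rule card_mono[OF finite_reach])
    show "nbhd (step_pair j) E A (next_block NU NV j) - S' \<subseteq> reach E NU NV u SU SV (Suc j)"
      unfolding reach_Suc_eq S'_def by (rule Diff_mono[OF nbhd_mono[OF A(1)] order.refl])
  qed
  finally show ?case using t S' \<sigma>Suc[rule_format, of j] by linarith
qed

definition end_nbhd :: "(nat \<times> nat) set \<Rightarrow> nat \<Rightarrow> nat \<Rightarrow> nat \<Rightarrow> nat set \<Rightarrow> nat set" where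
  "end_nbhd E NV k u' SV = nbhd Pair E {u'} (block NV k) - SV"

text \<open>Pairs of end vertices \<open>u, u'\<close> together with the vertex sets to be avoided (containing \<open>u, u'\<close>).\<close>

definition avoid_configs :: "nat \<Rightarrow> nat \<Rightarrow> nat \<Rightarrow> (nat \<times> nat \<times> nat set \<times> nat set) set" where
  "avoid_configs m n s =
     {(u, u', SU, SV). u < m \<and> u' < m \<and> SU \<subseteq> {..<m} \<and> card SU \<le> s + 2 \<and> SV \<subseteq> {..<n} \<and> card SV \<le> s}"

text \<open>Both sets are
  computed from the edges outside \<open>D\<close>, so that the edges inside \<open>D\<close> are still independent of them.\<close>

definition no_joining_edge ::
  "nat \<Rightarrow> nat \<Rightarrow> nat \<Rightarrow> (nat \<Rightarrow> nat) \<Rightarrow> nat \<times> nat \<times> nat set \<times> nat set \<Rightarrow> (nat \<times> nat) set \<Rightarrow> bool" where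
  "no_joining_edge NU NV k \<sigma> c E = (case c of (u, u', SU, SV) \<Rightarrow>
     let D = (block NU (k - 1) - SU) \<times> block NV k;
         E1 = E - D
     in \<sigma> (2 * k - 1) \<le> card (reach E1 NU NV u SU SV (2 * k - 1)) \<and> \<sigma> 0 \<le> card (end_nbhd E1 NV k u' SV)
        \<and> E \<inter> (reach E1 NU NV u SU SV (2 * k - 1) \<times> end_nbhd E1 NV k u' SV) = {})"

lemma finite_avoid_configs: "finite (avoid_configs m n s)"
proof (rule finite_subset)
  show "avoid_configs m n s \<subseteq> {..<m} \<times> {..<m} \<times> Pow {..<m} \<times> Pow {..<n}"
    unfolding avoid_configs_def by auto
qed auto

lemma prob_no_joining_edge_le:
  assumes "c \<in> avoid_configs m n s" "1 \<le> k" "NU * k \<le> m" "NV * (k + 1) \<le> n" "0 \<le> p" "p \<le> 1"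
  shows "subset_prob ({..<m} \<times> {..<n}) p (no_joining_edge NU NV k \<sigma> c) \<le> (1 - p) ^ (\<sigma> (2 * k - 1) * \<sigma> 0)"
proof -
  obtain u u' SU SV where c: "c = (u, u', SU, SV)" by (cases c) auto
  define D where "D = (block NU (k - 1) - SU) \<times> block NV k"
  define big where "big = (\<lambda>E1. \<sigma> (2 * k - 1) \<le> card (reach E1 NU NV u SU SV (2 * k - 1))
    \<and> \<sigma> 0 \<le> card (end_nbhd E1 NV k u' SV))"
  define f where "f = (\<lambda>E1. reach E1 NU NV u SU SV (2 * k - 1) \<times> end_nbhd E1 NV k u' SV)"
  have eq: "no_joining_edge NU NV k \<sigma> c = (\<lambda>E. big (E - D) \<and> E \<inter> f (E - D) = {})"
    unfolding no_joining_edge_def c D_def big_def f_def by (simp add: Let_def)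
  have "block NU (k - 1) \<subseteq> {..<m}" by (rule block_subset_lessThan[of _ k]) (use assms(2,3) in auto)
  moreover have "block NV k \<subseteq> {..<n}" by (rule block_subset_lessThan[of _ "k + 1"]) (use assms(4) in auto)
  ultimately have D: "D \<subseteq> {..<m} \<times> {..<n}" unfolding D_def by auto
  have odd: "odd (2 * k - 1)" "(2 * k - 1) div 2 = k - 1" using assms(2) by presburger+
  have "subset_prob ({..<m} \<times> {..<n}) p (\<lambda>E. big (E - D) \<and> E \<inter> f (E - D) = {})
      \<le> (1 - p) ^ (\<sigma> (2 * k - 1) * \<sigma> 0)"
  proof (rule subset_prob_conditional_disjoint_le[OF _ D assms(5,6)])
    fix E1 assume "E1 \<subseteq> {..<m} \<times> {..<n} - D" "big E1"
    have s1: "reach E1 NU NV u SU SV (2 * k - 1) \<subseteq> block NU (k - 1) - SU"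
      using reach_subset[of E1 NU NV u SU SV "2 * k - 1"] odd by (simp add: layer_block_def)
    have s2: "end_nbhd E1 NV k u' SV \<subseteq> block NV k"
      using nbhd_subset[of Pair E1 "{u'}" "block NV k"] unfolding end_nbhd_def by blast
    have "\<sigma> (2 * k - 1) * \<sigma> 0 \<le> card (f E1)"
      unfolding f_def card_cartesian_product using \<open>big E1\<close> unfolding big_def by (intro mult_le_mono) auto
    moreover have "f E1 \<subseteq> D" unfolding f_def D_def by (intro Sigma_mono s1 s2)
    ultimately show "f E1 \<subseteq> D \<and> \<sigma> (2 * k - 1) * \<sigma> 0 \<le> card (f E1)" by simp
  qed simp
  then show ?thesis unfolding eq .
qed

lemma path_avoiding_if_expanding:
  assumes k: "1 \<le> k"
    and deg0: "min_degree_into E m (block NV 0) \<tau>0" and degk: "min_degree_into E m (block NV k) \<tau>0"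
    and exp: "\<forall>j<2 * k - 1. expands E NU NV j (\<sigma> j) (\<tau> j)"
    and joined: "\<forall>c\<in>avoid_configs m n s. \<not> no_joining_edge NU NV k \<sigma> c E"
    and \<sigma>0: "\<sigma> 0 + (s + 2) \<le> \<tau>0" and \<sigma>Suc: "\<forall>j. \<sigma> (Suc j) + (s + 2) \<le> \<tau> j"
    and c: "(u, u', SU, SV) \<in> avoid_configs m n s" and uu: "u \<in> SU" "u' \<in> SU" "u \<noteq> u'"
  shows "\<exists>P. is_path E (2 * k + 2) (Inl u) (Inl u') P \<and> internal_vertices P \<inter> (Inl ` SU \<union> Inr ` SV) = {}"
proof -
  have S: "finite SU" "finite SV" "card SU \<le> s + 2" "card SV \<le> s + 2" "u < m" "u' < m"
    using c unfolding avoid_configs_def by (auto intro: finite_subset)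
  define D where "D = (block NU (k - 1) - SU) \<times> block NV k"
  have "\<sigma> (2 * k - 1) \<le> card (reach E NU NV u SU SV (2 * k - 1))"
    by (rule reach_card_ge[OF deg0 S(5) exp S(1-4) \<sigma>0 \<sigma>Suc]) simp
  moreover have "\<sigma> 0 \<le> card (end_nbhd E NV k u' SV)"
  proof -
    have "\<tau>0 \<le> card (nbhd Pair E {u'} (block NV k))" using degk S(6) unfolding min_degree_into_def by auto
    moreover have "card (nbhd Pair E {u'} (block NV k)) - card SV \<le> card (end_nbhd E NV k u' SV)"
      unfolding end_nbhd_def by (rule diff_card_le_card_Diff[OF S(2)])
    ultimately show ?thesis using \<sigma>0 S(4) by linarith
  qed
  moreover have "reach (E - D) NU NV u SU SV (2 * k - 1) = reach E NU NV u SU SV (2 * k - 1)"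
    by (rule reach_Diff_eq) (use k in \<open>auto simp: D_def\<close>)
  moreover have "end_nbhd (E - D) NV k u' SV = end_nbhd E NV k u' SV"
    unfolding end_nbhd_def using uu by (subst nbhd_Diff_eq) (auto simp: D_def)
  moreover have "\<not> no_joining_edge NU NV k \<sigma> (u, u', SU, SV) E" using joined c by blast
  ultimately have "E \<inter> (reach E NU NV u SU SV (2 * k - 1) \<times> end_nbhd E NV k u' SV) \<noteq> {}"
    unfolding no_joining_edge_def Let_def D_def by simp
  then obtain w v where wv: "(w, v) \<in> E" "w \<in> reach E NU NV u SU SV (2 * k - 1)" "v \<in> end_nbhd E NV k u' SV"
    by blast
  then have v: "v \<in> block NV k" "v \<notin> SV" "(u', v) \<in> E" unfolding end_nbhd_def nbhd_def by auto
  show ?thesis using reach_imp_path[OF k wv(2) v(1,2) wv(1) v(3) uu] .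
qed

lemma many_disjoint_paths_if_expanding:
  assumes k: "1 \<le> k" and E: "E \<subseteq> {..<m} \<times> {..<n}"
    and deg0: "min_degree_into E m (block NV 0) \<tau>0" and degk: "min_degree_into E m (block NV k) \<tau>0"
    and exp: "\<forall>j<2 * k - 1. expands E NU NV j (\<sigma> j) (\<tau> j)"
    and joined: "\<forall>c\<in>avoid_configs m n s. \<not> no_joining_edge NU NV k \<sigma> c E"
    and s: "s = (2 * k + 1) * j0" and r: "r \<le> real (Suc j0)"
    and \<sigma>0: "\<sigma> 0 + (s + 2) \<le> \<tau>0" and \<sigma>Suc: "\<forall>j. \<sigma> (Suc j) + (s + 2) \<le> \<tau> j"
    and uu: "u < m" "u' < m" "u \<noteq> u'"
  shows "many_disjoint_paths E (2 * k + 2) r (Inl u) (Inl u')"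
proof -
  have avoid: "\<exists>P. is_path E (2 * k + 1 + 1) (Inl u) (Inl u') P \<and> internal_vertices P \<inter> S = {}"
    if S: "finite S" "card S \<le> (2 * k + 1) * j0" for S
  proof -
    define SU where "SU = {i. i < m \<and> Inl i \<in> S} \<union> {u, u'}"
    define SV where "SV = {j. j < n \<and> Inr j \<in> S}"
    have "card (Inl ` {i. i < m \<and> Inl i \<in> S} :: (nat + nat) set) \<le> card S"
      by (rule card_mono[OF S(1)]) blast
    moreover have "card (Inr ` SV :: (nat + nat) set) \<le> card S"
      by (rule card_mono[OF S(1)]) (auto simp: SV_def)
    ultimately have "card {i. i < m \<and> Inl i \<in> S} \<le> s" "card SV \<le> s"
      using S(2) s by (simp_all add: card_image)
    moreover have "card SU \<le> card {i. i < m \<and> Inl i \<in> S} + 2"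
      unfolding SU_def by (rule order.trans[OF card_Un_le]) (simp add: card_insert_if)
    moreover have "SU \<subseteq> {..<m}" "SV \<subseteq> {..<n}" using uu unfolding SU_def SV_def by auto
    ultimately have "(u, u', SU, SV) \<in> avoid_configs m n s"
      using uu unfolding avoid_configs_def by simp
    moreover have "u \<in> SU" "u' \<in> SU" unfolding SU_def by auto
    ultimately obtain P where P: "is_path E (2 * k + 2) (Inl u) (Inl u') P"
      "internal_vertices P \<inter> (Inl ` SU \<union> Inr ` SV) = {}"
      using path_avoiding_if_expanding[OF k deg0 degk exp joined \<sigma>0 \<sigma>Suc _ _ _ uu(3)] by blast
    have "z \<notin> S" if z: "z \<in> internal_vertices P" for z
    proof -
      have "z \<in> set P" using internal_vertices_subset[of P] z by blast
      then have "z \<in> Inl ` {..<m} \<union> Inr ` {..<n}" using path_vertex_range[OF P(1) _ E] by simp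
      then show ?thesis using P(2) z unfolding SU_def SV_def by blast
    qed
    then have "internal_vertices P \<inter> S = {}" by blast
    then show ?thesis using P(1) by (intro exI[of _ P]) (simp add: add.commute)
  qed
  obtain \<P> where "finite \<P>" "card \<P> = Suc j0" "\<forall>P\<in>\<P>. is_path E (2 * k + 1 + 1) (Inl u) (Inl u') P"
    "\<forall>P\<in>\<P>. \<forall>Q\<in>\<P>. P \<noteq> Q \<longrightarrow> internal_vertices P \<inter> internal_vertices Q = {}"
    using disjoint_paths_greedy[of "2 * k + 1" j0 E "Inl u" "Inl u'" "Suc j0", OF avoid] by auto
  then show ?thesis unfolding many_disjoint_paths_def using r
    by (intro exI[of _ \<P>]) (auto simp: add.commute)
qed

lemma prob_not_linked_le:
  fixes \<sigma> \<tau> :: "nat \<Rightarrow> nat"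
  assumes k: "1 \<le> k" and NU: "NU * k \<le> m" and NV: "NV * (k + 1) \<le> n" and p: "0 \<le> p" "p \<le> 1"
    and s: "s = (2 * k + 1) * j0" and r: "r \<le> real (Suc j0)"
    and \<sigma>0: "\<sigma> 0 + (s + 2) \<le> \<tau>0" and \<sigma>Suc: "\<forall>j. \<sigma> (Suc j) + (s + 2) \<le> \<tau> j"
  defines "X \<equiv> {..<m} \<times> {..<n}"
  shows "subset_prob X p (\<lambda>E. \<not> (\<forall>u<m. \<forall>u'<m. u \<noteq> u' \<longrightarrow> many_disjoint_paths E (2 * k + 2) r (Inl u) (Inl u')))
    \<le> subset_prob X p (\<lambda>E. \<not> min_degree_into E m (block NV 0) \<tau>0)
      + subset_prob X p (\<lambda>E. \<not> min_degree_into E m (block NV k) \<tau>0)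
      + (\<Sum>j<2 * k - 1. subset_prob X p (\<lambda>E. \<not> expands E NU NV j (\<sigma> j) (\<tau> j)))
      + real (card (avoid_configs m n s)) * (1 - p) ^ (\<sigma> (2 * k - 1) * \<sigma> 0)"
proof -
  let ?A = "\<lambda>E. \<not> min_degree_into E m (block NV 0) \<tau>0"
  let ?B = "\<lambda>E. \<not> min_degree_into E m (block NV k) \<tau>0"
  let ?C = "\<lambda>E. \<exists>j\<in>{..<2 * k - 1}. \<not> expands E NU NV j (\<sigma> j) (\<tau> j)"
  let ?F = "\<lambda>E. \<exists>c\<in>avoid_configs m n s. no_joining_edge NU NV k \<sigma> c E"
  have "subset_prob X p (\<lambda>E. \<not> (\<forall>u<m. \<forall>u'<m. u \<noteq> u' \<longrightarrow> many_disjoint_paths E (2 * k + 2) r (Inl u) (Inl u')))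
      \<le> subset_prob X p (\<lambda>E. ?A E \<or> (?B E \<or> (?C E \<or> ?F E)))"
  proof (rule subset_prob_mono[OF p])
    fix E assume E: "E \<subseteq> X"
      and bad: "\<not> (\<forall>u<m. \<forall>u'<m. u \<noteq> u' \<longrightarrow> many_disjoint_paths E (2 * k + 2) r (Inl u) (Inl u'))"
    show "?A E \<or> (?B E \<or> (?C E \<or> ?F E))"
    proof (rule ccontr)
      assume "\<not> (?A E \<or> (?B E \<or> (?C E \<or> ?F E)))"
      then have "min_degree_into E m (block NV 0) \<tau>0" "min_degree_into E m (block NV k) \<tau>0"
        "\<forall>j<2 * k - 1. expands E NU NV j (\<sigma> j) (\<tau> j)"
        "\<forall>c\<in>avoid_configs m n s. \<not> no_joining_edge NU NV k \<sigma> c E"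
        by auto
      from many_disjoint_paths_if_expanding[OF k E[unfolded X_def] this s r \<sigma>0 \<sigma>Suc]
      show False using bad by blast
    qed
  qed
  also have "\<dots> \<le> subset_prob X p ?A + (subset_prob X p ?B + (subset_prob X p ?C + subset_prob X p ?F))"
    using subset_prob_disj_le[OF p, of X ?A "\<lambda>E. ?B E \<or> (?C E \<or> ?F E)"]
      subset_prob_disj_le[OF p, of X ?B "\<lambda>E. ?C E \<or> ?F E"] subset_prob_disj_le[OF p, of X ?C ?F]
    by linarith
  also have "subset_prob X p ?C \<le> (\<Sum>j<2 * k - 1. subset_prob X p (\<lambda>E. \<not> expands E NU NV j (\<sigma> j) (\<tau> j)))"
    by (rule subset_prob_Bex_le[OF p]) simp
  also have "subset_prob X p ?F \<le> (\<Sum>c\<in>avoid_configs m n s. subset_prob X p (no_joining_edge NU NV k \<sigma> c))"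
    by (rule subset_prob_Bex_le[OF p finite_avoid_configs])
  also have "\<dots> \<le> (\<Sum>c\<in>avoid_configs m n s. (1 - p) ^ (\<sigma> (2 * k - 1) * \<sigma> 0))"
    unfolding X_def by (intro sum_mono prob_no_joining_edge_le[OF _ k NU NV p])
  finally show ?thesis by simp
qed

section \<open>Estimating the failure probabilities\<close>

lemma one_minus_power_le_exp:
  fixes p :: real
  assumes "0 \<le> p" "p \<le> 1"
  shows "(1 - p) ^ x \<le> exp (- p * real x)"
proof -
  have "(1 - p) ^ x \<le> exp (- p) ^ x"
    using assms by (intro power_mono) (auto simp: exp_ge_add_one_self[of "-p", simplified])
  also have "\<dots> = exp (- p * real x)" by (simp add: exp_of_nat_mult[symmetric] mult.commute)
  finally show ?thesis .
qed

lemma power_le_exp_ln: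
  assumes "NP \<le> n" "1 \<le> n"
  shows "real NP ^ t \<le> exp (real t * ln (real n))"
proof -
  have "real NP ^ t \<le> real n ^ t" using assms by (intro power_mono) auto
  also have "\<dots> = exp (real t * ln (real n))" using assms by (simp add: powr_realpow[symmetric] powr_def)
  finally show ?thesis .
qed

lemma power_eq_exp_ln: "0 < x \<Longrightarrow> x ^ N = exp (real N * ln x)"
  by (simp add: powr_realpow[symmetric] powr_def)

text \<open>The union bound of \<open>subset_prob_small_nbhd_le\<close> is at most \<open>n ^ -3\<close> once the target set has
  expected degree \<open>p NQ \<ge> 24 ln n\<close> and only a \<open>1 / (8 ln n)\<close> fraction of that is demanded.\<close>

lemma small_nbhd_bound_le:
  fixes n NP NQ t t' :: nat and p :: real
  assumes n: "2 \<le> n" and p: "0 \<le> p" "p \<le> 1" and NP: "NP \<le> n" and NQ: "NQ \<le> n"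
    and t: "1 \<le> t" and t'1: "real t' \<le> real NQ / 2"
    and t'2: "real t' \<le> p * real t * real NQ / (8 * ln (real n))"
    and pQ: "24 * ln (real n) \<le> p * real NQ"
  shows "real NP ^ t * real NQ ^ t' * (1 - p) ^ (t * (NQ - t')) \<le> 1 / real n ^ 3"
proof -
  define L where "L = ln (real n)"
  have L: "0 < L" unfolding L_def using n by simp
  have "real NP ^ t \<le> exp (real t * L)" "real NQ ^ t' \<le> exp (real t' * L)"
    using n NP NQ unfolding L_def by (auto intro!: power_le_exp_ln)
  moreover have "(1 - p) ^ (t * (NQ - t')) \<le> exp (- p * (real t * (real NQ - real t')))"
    using one_minus_power_le_exp[OF p, of "t * (NQ - t')"] t'1 by (simp add: of_nat_diff)
  ultimately have "real NP ^ t * real NQ ^ t' * (1 - p) ^ (t * (NQ - t'))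
      \<le> exp (real t * L) * exp (real t' * L) * exp (- p * (real t * (real NQ - real t')))"
    using p by (intro mult_mono) auto
  also have "\<dots> = exp (real t * L + real t' * L - p * real t * (real NQ - real t'))"
    by (simp add: exp_add[symmetric] algebra_simps)
  also have "\<dots> \<le> exp (- 3 * L)"
  proof -
    have "real t' * L \<le> p * real t * real NQ / 8"
      using t'2 L unfolding L_def by (simp add: field_simps)
    moreover have "real t * (24 * L) \<le> real t * (p * real NQ)"
      using pQ t unfolding L_def by (intro mult_left_mono) auto
    moreover have "p * real t * (real NQ / 2) \<le> p * real t * (real NQ - real t')"
      using t'1 p t by (intro mult_left_mono) auto
    moreover have "p * real NQ * 1 \<le> p * real NQ * real t" using t p by (intro mult_left_mono) auto
    ultimately show ?thesis using pQ L unfolding L_def by (simp add: algebra_simps)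
  qed
  also have "\<dots> = 1 / real n ^ 3"
    using n power_eq_exp_ln[of "real n" 3] by (simp add: L_def exp_minus divide_inverse)
  finally show ?thesis .
qed

lemma prob_not_min_degree_le:
  assumes "block NV i \<subseteq> {..<n}" "m \<le> n" "NV \<le> n" "2 \<le> n" "0 \<le> p" "p \<le> 1"
    and "real \<tau>0 \<le> real NV / 2" "real \<tau>0 \<le> p * real NV / (8 * ln (real n))"
    and "24 * ln (real n) \<le> p * real NV"
  shows "subset_prob ({..<m} \<times> {..<n}) p (\<lambda>E. \<not> min_degree_into E m (block NV i) \<tau>0) \<le> 1 / real n ^ 3"
proof -
  have "subset_prob ({..<m} \<times> {..<n}) p (\<lambda>E. \<not> min_degree_into E m (block NV i) \<tau>0)
      \<le> subset_prob ({..<m} \<times> {..<n}) p (\<lambda>E. \<exists>A. A \<subseteq> {..<m} \<and> card A = 1 \<and> card (nbhd Pair E A (block NV i)) < \<tau>0)"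
  proof (rule subset_prob_mono[OF assms(5,6)])
    fix E assume "\<not> min_degree_into E m (block NV i) \<tau>0"
    then obtain u where "u < m" "card (nbhd Pair E {u} (block NV i)) < \<tau>0"
      unfolding min_degree_into_def by auto
    then show "\<exists>A. A \<subseteq> {..<m} \<and> card A = 1 \<and> card (nbhd Pair E A (block NV i)) < \<tau>0"
      by (intro exI[of _ "{u}"]) auto
  qed
  also have "\<dots> \<le> real (card {..<m}) ^ 1 * real (card (block NV i)) ^ \<tau>0 * (1 - p) ^ (1 * (card (block NV i) - \<tau>0))"
    by (rule subset_prob_small_nbhd_le) (use assms in auto)
  also have "\<dots> \<le> 1 / real n ^ 3"
    by (simp only: card_lessThan card_block, rule small_nbhd_bound_le) (use assms in auto)
  finally show ?thesis .
qed

lemma prob_not_expands_le: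
  assumes k: "1 \<le> k" and j: "j < 2 * k - 1" and NU: "NU * k \<le> m" and NV: "NV * (k + 1) \<le> n"
    and n: "m \<le> n" "2 \<le> n" and p: "0 \<le> p" "p \<le> 1" and t: "1 \<le> t"
    and t'1: "real t' \<le> real (card (next_block NU NV j)) / 2"
    and t'2: "real t' \<le> p * real t * real (card (next_block NU NV j)) / (8 * ln (real n))"
    and pQ: "24 * ln (real n) \<le> p * real (card (next_block NU NV j))"
  shows "subset_prob ({..<m} \<times> {..<n}) p (\<lambda>E. \<not> expands E NU NV j t t') \<le> 1 / real n ^ 3"
proof -
  have j': "j div 2 < k" "Suc j div 2 < k + 1" using j by auto
  have blocks: "block NU (j div 2) \<subseteq> {..<m}" "block NV (j div 2) \<subseteq> {..<n}" "block NV (Suc j div 2) \<subseteq> {..<n}"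
    using block_subset_lessThan[OF j'(1) NU] block_subset_lessThan[OF _ NV, of "j div 2"]
      block_subset_lessThan[OF j'(2) NV] j' by auto
  have "NU \<le> NU * k" "NV \<le> NV * (k + 1)" using k by simp_all
  then have sizes: "NU \<le> n" "NV \<le> n" using NU NV n(1) by linarith+
  have "subset_prob ({..<m} \<times> {..<n}) p (\<lambda>E. \<not> expands E NU NV j t t')
      = subset_prob ({..<m} \<times> {..<n}) p (\<lambda>E. \<exists>A. A \<subseteq> layer_block NU NV j \<and> card A = t \<and>
          card (nbhd (step_pair j) E A (next_block NU NV j)) < t')"
    unfolding expands_def by (simp add: not_le)
  also have "\<dots> \<le> real (card (layer_block NU NV j)) ^ t * real (card (next_block NU NV j)) ^ t'
      * (1 - p) ^ (t * (card (next_block NU NV j) - t'))"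
  proof (rule subset_prob_small_nbhd_le[OF _ _ _ _ _ _ p])
    fix x y assume "x \<in> layer_block NU NV j" "y \<in> next_block NU NV j"
    then show "step_pair j x y \<in> {..<m} \<times> {..<n}"
      using blocks by (auto simp: layer_block_def next_block_def step_pair_def rev_pair_def split: if_splits)
  next
    fix x y x' y' assume "step_pair j x y = step_pair j x' y'"
    then show "x = x' \<and> y = y'" by (auto simp: step_pair_def rev_pair_def split: if_splits)
  qed (use t'1 in \<open>auto simp: layer_block_def next_block_def\<close>)
  also have "\<dots> \<le> 1 / real n ^ 3"
    using sizes by (intro small_nbhd_bound_le[OF _ p _ _ t t'1 t'2 pQ])
      (use n in \<open>auto simp: layer_block_def next_block_def\<close>)
  finally show ?thesis .
qed

lemma card_bounded_subsets_le: "card {A. A \<subseteq> {..<N::nat} \<and> card A \<le> s} \<le> (N + 1) ^ s"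
proof -
  have eq: "{A. A \<subseteq> {..<N} \<and> card A \<le> s} = (\<Union>i\<in>{..s}. {A. A \<subseteq> {..<N} \<and> card A = i})"
    by auto
  have "card {A. A \<subseteq> {..<N} \<and> card A \<le> s} \<le> (\<Sum>i\<in>{..s}. card {A. A \<subseteq> {..<N} \<and> card A = i})"
    unfolding eq by (rule card_UN_le) simp
  also have "\<dots> = (\<Sum>i\<in>{..s}. N choose i)" by (simp add: n_subsets)
  also have "\<dots> \<le> (\<Sum>i\<in>{..s}. (s choose i) * N ^ i)"
  proof (rule sum_mono)
    fix i assume "i \<in> {..s}"
    then have "1 \<le> s choose i" by (simp add: Suc_leI)
    then have "N ^ i \<le> (s choose i) * N ^ i" by simp
    then show "N choose i \<le> (s choose i) * N ^ i" using binomial_le_power le_trans by blast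
  qed
  also have "\<dots> = (N + 1) ^ s" using binomial[of N 1 s] by (simp add: mult.commute)
  finally show ?thesis .
qed

lemma card_avoid_configs_le:
  assumes "m \<le> n"
  shows "card (avoid_configs m n s) \<le> (n + 1) ^ (2 * s + 4)"
proof -
  let ?SU = "{A. A \<subseteq> {..<m} \<and> card A \<le> s + 2}"
  let ?SV = "{A. A \<subseteq> {..<n} \<and> card A \<le> s}"
  have "card (avoid_configs m n s) \<le> card ({..<m} \<times> {..<m} \<times> ?SU \<times> ?SV)"
    by (rule card_mono) (auto simp: avoid_configs_def)
  also have "\<dots> = m * m * card ?SU * card ?SV" by (simp add: card_cartesian_product)
  also have "\<dots> \<le> (n + 1) * (n + 1) * (n + 1) ^ (s + 2) * (n + 1) ^ s"
  proof (intro mult_le_mono)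
    show "card ?SU \<le> (n + 1) ^ (s + 2)"
      using card_bounded_subsets_le[of m "s + 2"] power_mono[of "m + 1" "n + 1" "s + 2"] assms by simp
    show "card ?SV \<le> (n + 1) ^ s" using card_bounded_subsets_le[of n s] .
  qed (use assms in auto)
  also have "\<dots> = (n + 1) ^ (2 * s + 4)"
  proof -
    have "2 * s + 4 = ((1 + 1) + (s + 2)) + s" by simp
    then show ?thesis by (simp only: power_add) simp
  qed
  finally show ?thesis .
qed

lemma prob_no_joining_edges_le:
  assumes "m \<le> n" "1 \<le> n" "0 \<le> p" "p \<le> 1" and K: "(2 * real s + 6) * ln (real n + 1) \<le> p * real K"
  shows "real (card (avoid_configs m n s)) * (1 - p) ^ K \<le> 1 / real n ^ 2"
proof -
  have n1: "0 < real n + 1" by simp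
  have "real (card (avoid_configs m n s)) \<le> (real n + 1) ^ (2 * s + 4)"
    using card_avoid_configs_le[OF assms(1), of s] by (metis of_nat_1 of_nat_add of_nat_le_iff of_nat_power)
  then have "real (card (avoid_configs m n s)) * (1 - p) ^ K
      \<le> exp (real (2 * s + 4) * ln (real n + 1)) * exp (- p * real K)"
    using one_minus_power_le_exp[OF assms(3,4)] power_eq_exp_ln[OF n1] assms(3,4)
    by (intro mult_mono) auto
  also have "\<dots> = exp (real (2 * s + 4) * ln (real n + 1) - p * real K)"
    by (simp add: exp_add[symmetric])
  also have "\<dots> \<le> exp (- 2 * ln (real n + 1))"
    using K by (simp add: algebra_simps)
  also have "\<dots> = 1 / (real n + 1) ^ 2"
    using power_eq_exp_ln[OF n1, of 2] by (simp add: exp_minus divide_inverse)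
  also have "\<dots> \<le> 1 / real n ^ 2"
    using assms(2) by (intro divide_left_mono power_mono) auto
  finally show ?thesis .
qed

lemma floor_half_bounds:
  fixes x :: real and s :: nat
  assumes "2 * real s + 6 \<le> x"
  shows "nat \<lfloor>x / 2\<rfloor> + (s + 2) \<le> nat \<lfloor>x\<rfloor>" "x / 4 \<le> real (nat \<lfloor>x / 2\<rfloor>)"
    "real (nat \<lfloor>x\<rfloor>) \<le> x" "1 \<le> nat \<lfloor>x / 2\<rfloor>"
proof -
  have a: "real_of_int \<lfloor>x / 2\<rfloor> \<le> x / 2" "x - 1 < real_of_int \<lfloor>x\<rfloor>" "x / 2 - 1 < real_of_int \<lfloor>x / 2\<rfloor>"
    by linarith+
  have "real_of_int \<lfloor>x / 2\<rfloor> + real s + 2 < real_of_int \<lfloor>x\<rfloor> + 1" using a assms by linarith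
  then have "real_of_int (\<lfloor>x / 2\<rfloor> + int s + 2) < real_of_int (\<lfloor>x\<rfloor> + 1)" by simp
  then have b: "\<lfloor>x / 2\<rfloor> + int s + 2 \<le> \<lfloor>x\<rfloor>" by linarith
  have c: "0 \<le> \<lfloor>x / 2\<rfloor>" using assms by simp
  show "nat \<lfloor>x / 2\<rfloor> + (s + 2) \<le> nat \<lfloor>x\<rfloor>" using b c by linarith
  have "x / 4 \<le> real_of_int \<lfloor>x / 2\<rfloor>" using a assms by linarith
  then show "x / 4 \<le> real (nat \<lfloor>x / 2\<rfloor>)" using c by simp
  show "real (nat \<lfloor>x\<rfloor>) \<le> x" using c b a by simp
  show "1 \<le> nat \<lfloor>x / 2\<rfloor>" using a assms by linarith
qed

lemma min_mult_le:
  fixes g A \<kappa> :: real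
  assumes "1 \<le> g" "0 \<le> \<kappa>"
  shows "min (g * A) \<kappa> \<le> g * min A \<kappa>"
proof (cases "A \<le> \<kappa>")
  case False
  then have "min A \<kappa> = \<kappa>" by simp
  moreover have "\<kappa> \<le> g * \<kappa>" using assms mult_right_mono[of 1 g \<kappa>] by simp
  ultimately show ?thesis by (simp add: min_le_iff_disj)
qed (simp add: min_def)

section \<open>Sizes of the layers\<close>

text \<open>The sizes guaranteed for the layers of the search: \<open>layer_lb j\<close> for layer \<open>j\<close> itself, and
  \<open>nbhd_lb j\<close> for the neighbourhood of a \<open>layer_lb j\<close>-subset of it in the next block, where
  \<open>gU\<close> and \<open>gV\<close> are the admissible expansion factors into U- and V-blocks of sizes \<open>NU\<close> and \<open>NV\<close>.
  Halving \<open>nbhd_lb j\<close> leaves room for the removed vertices.\<close>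

definition capped_growth :: "real \<Rightarrow> real \<Rightarrow> real \<Rightarrow> real \<Rightarrow> nat \<Rightarrow> nat \<Rightarrow> real" where
  "capped_growth gU gV NU NV j x =
     min ((if even j then gU else gV) * real x) ((if even j then NU else NV) / 2)"

primrec layer_lb :: "real \<Rightarrow> real \<Rightarrow> real \<Rightarrow> real \<Rightarrow> nat \<Rightarrow> nat" where
  "layer_lb gU gV NU NV 0 = nat \<lfloor>gV / 2\<rfloor>"
| "layer_lb gU gV NU NV (Suc j) = nat \<lfloor>capped_growth gU gV NU NV j (layer_lb gU gV NU NV j) / 2\<rfloor>"

definition nbhd_lb :: "real \<Rightarrow> real \<Rightarrow> real \<Rightarrow> real \<Rightarrow> nat \<Rightarrow> nat" where
  "nbhd_lb gU gV NU NV j = nat \<lfloor>capped_growth gU gV NU NV j (layer_lb gU gV NU NV j)\<rfloor>"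

context
  fixes gU gV NU NV :: real and s :: nat
  assumes gU: "2 * real s + 6 \<le> gU" and gV: "2 * real s + 6 \<le> gV"
    and NU: "4 * real s + 12 \<le> NU" and NV: "4 * real s + 12 \<le> NV"
begin

lemma capped_growth_ge: "1 \<le> x \<Longrightarrow> 2 * real s + 6 \<le> capped_growth gU gV NU NV j x"
proof -
  assume x: "1 \<le> x"
  define g where "g = (if even j then gU else gV)"
  have g: "2 * real s + 6 \<le> g" using gU gV unfolding g_def by simp
  moreover have "g * 1 \<le> g * real x" using x g by (intro mult_left_mono) auto
  ultimately have "2 * real s + 6 \<le> g * real x" by linarith
  moreover have "2 * real s + 6 \<le> (if even j then NU else NV) / 2" using NU NV by auto
  ultimately show ?thesis unfolding capped_growth_def g_def[symmetric] by simp
qed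

lemma layer_lb_ge_1: "1 \<le> layer_lb gU gV NU NV j"
proof (induction j)
  case 0
  then show ?case using floor_half_bounds(4)[OF gV] by simp
next
  case (Suc j)
  then show ?case using floor_half_bounds(4)[OF capped_growth_ge] by simp
qed

lemma capped_growth_layer_lb_ge: "2 * real s + 6 \<le> capped_growth gU gV NU NV j (layer_lb gU gV NU NV j)"
  using capped_growth_ge layer_lb_ge_1 by simp

lemma layer_lb_0_room: "layer_lb gU gV NU NV 0 + (s + 2) \<le> nat \<lfloor>gV\<rfloor>"
  using floor_half_bounds(1)[OF gV] by simp

lemma layer_lb_Suc_room: "layer_lb gU gV NU NV (Suc j) + (s + 2) \<le> nbhd_lb gU gV NU NV j"
  using floor_half_bounds(1)[OF capped_growth_layer_lb_ge] by (simp add: nbhd_lb_def)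

lemma nbhd_lb_le:
  "real (nbhd_lb gU gV NU NV j) \<le> (if even j then NU else NV) / 2"
  "real (nbhd_lb gU gV NU NV j) \<le> (if even j then gU else gV) * real (layer_lb gU gV NU NV j)"
  using floor_half_bounds(3)[OF capped_growth_layer_lb_ge] unfolding nbhd_lb_def capped_growth_def
  by auto

lemma layer_lb_ge:
  "min ((gV / 4) ^ (j div 2 + 1) * (gU / 4) ^ (Suc j div 2)) (min NU NV / 8) \<le> real (layer_lb gU gV NU NV j)"
proof (induction j)
  case 0
  have "gV / 4 \<le> real (layer_lb gU gV NU NV 0)" using floor_half_bounds(2)[OF gV] by simp
  then show ?case by (simp add: min_le_iff_disj)
next
  case (Suc j)
  define \<kappa> where "\<kappa> = min NU NV / 8"
  define B where "B = (gV / 4) ^ (j div 2 + 1) * (gU / 4) ^ (Suc j div 2)"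
  define g where "g = (if even j then gU else gV)"
  have g: "1 \<le> g / 4" using gU gV unfolding g_def by auto
  have \<kappa>: "0 \<le> \<kappa>" "\<kappa> \<le> (if even j then NU else NV) / 2 / 4" unfolding \<kappa>_def using NU NV by auto
  have eq: "(gV / 4) ^ (Suc j div 2 + 1) * (gU / 4) ^ (Suc (Suc j) div 2) = g / 4 * B"
    unfolding B_def g_def by (cases "even j") (auto elim!: evenE oddE)
  have "min ((gV / 4) ^ (Suc j div 2 + 1) * (gU / 4) ^ (Suc (Suc j) div 2)) \<kappa> \<le> g / 4 * min B \<kappa>"
    unfolding eq by (rule min_mult_le[OF g \<kappa>(1)])
  also have "\<dots> \<le> g / 4 * real (layer_lb gU gV NU NV j)"
    using Suc g unfolding B_def \<kappa>_def by (intro mult_left_mono) auto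
  finally have "min ((gV / 4) ^ (Suc j div 2 + 1) * (gU / 4) ^ (Suc (Suc j) div 2)) \<kappa>
      \<le> capped_growth gU gV NU NV j (layer_lb gU gV NU NV j) / 4"
    using \<kappa>(2) unfolding capped_growth_def g_def by (auto simp: min_le_iff_disj)
  also have "\<dots> \<le> real (layer_lb gU gV NU NV (Suc j))"
    using floor_half_bounds(2)[OF capped_growth_layer_lb_ge] by simp
  finally show ?case unfolding \<kappa>_def .
qed


lemma layer_lb_product_ge:
  assumes "1 \<le> k"
  shows "min ((gV / 4) ^ k * (gU / 4) ^ k) (min NU NV / 8) * (gV / 4)
    \<le> real (layer_lb gU gV NU NV (2 * k - 1)) * real (layer_lb gU gV NU NV 0)"
proof (rule mult_mono)
  have "(2 * k - 1) div 2 + 1 = k" "Suc (2 * k - 1) div 2 = k" using assms by presburger+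
  then show "min ((gV / 4) ^ k * (gU / 4) ^ k) (min NU NV / 8) \<le> real (layer_lb gU gV NU NV (2 * k - 1))"
    using layer_lb_ge[of "2 * k - 1"] by simp
  show "gV / 4 \<le> real (layer_lb gU gV NU NV 0)" using floor_half_bounds(2)[OF gV] by simp
qed (use gV in auto)

end

lemma failure_sum_le:
  assumes k: "1 \<le> k" and n: "4 * k + 2 \<le> n" "3 \<le> n"
  shows "1 / real n ^ 3 + 1 / real n ^ 3 + (\<Sum>j<2 * k - 1. 1 / real n ^ 3) + 1 / real n ^ 2 \<le> 1 / real n"
proof -
  have "real (2 * k + 1) / real n ^ 3 \<le> (real n / 2) / real n ^ 3"
    using n by (intro divide_right_mono) auto
  also have "\<dots> = 1 / (2 * real n ^ 2)" using n by (simp add: field_simps power3_eq_cube power2_eq_square)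
  finally have "real (2 * k + 1) / real n ^ 3 \<le> 1 / (2 * real n ^ 2)" .
  moreover have "3 / (2 * real n ^ 2) \<le> 1 / real n" using n by (simp add: field_simps power2_eq_square)
  moreover have "1 / real n ^ 3 + 1 / real n ^ 3 + (\<Sum>j<2 * k - 1. 1 / real n ^ 3)
      = real (2 * k + 1) / real n ^ 3"
    using k by (simp add: of_nat_diff add_divide_distrib[symmetric])
  ultimately show ?thesis by (simp add: field_simps)
qed

lemma prob_not_all_linked_le:
  fixes m n k :: nat and p r :: real
  defines "NU \<equiv> m div k" and "NV \<equiv> n div (k + 1)" and "s \<equiv> (2 * k + 1) * nat \<lceil>r\<rceil>"
    and "gU \<equiv> p * real (m div k) / (8 * ln (real n))" and "gV \<equiv> p * real (n div (k + 1)) / (8 * ln (real n))"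
  assumes k: "1 \<le> k" and n: "4 * k + 2 \<le> n" "3 \<le> n" and mn: "m \<le> n" and p: "0 \<le> p" "p \<le> 1"
    and growth: "2 * real s + 6 \<le> gU" "2 * real s + 6 \<le> gV"
    and sizes: "4 * real s + 12 \<le> real NU" "4 * real s + 12 \<le> real NV"
    and joining: "(2 * real s + 6) * ln (real n + 1) \<le>
              p * min ((gV / 4) ^ k * (gU / 4) ^ k) (min (real NU) (real NV) / 8) * (gV / 4)"
  shows "subset_prob ({..<m} \<times> {..<n}) p (\<lambda>E. \<not> (\<forall>u<m. \<forall>u'<m. u \<noteq> u' \<longrightarrow>
            many_disjoint_paths E (2 * k + 2) r (Inl u) (Inl u'))) \<le> 1 / real n"
proof -
  let ?X = "{..<m} \<times> {..<n}"
  define L where "L = ln (real n)"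
  define \<sigma> where "\<sigma> = layer_lb gU gV (real NU) (real NV)"
  define \<tau> where "\<tau> = nbhd_lb gU gV (real NU) (real NV)"
  define \<tau>0 where "\<tau>0 = nat \<lfloor>gV\<rfloor>"
  note seq = layer_lb_0_room[OF growth sizes] layer_lb_Suc_room[OF growth sizes]
    nbhd_lb_le[OF growth sizes] layer_lb_ge_1[OF growth sizes]
  have L: "1 \<le> L" unfolding L_def using n ln_ge_iff[of "real n" 1] exp_le by (simp add: order_trans)
  have NU_le: "NU * k \<le> m" unfolding NU_def by simp
  have NV_le: "NV * (k + 1) \<le> n" unfolding NV_def by (metis div_times_less_eq_dividend)
  have "NU \<le> m" "NV \<le> n" unfolding NU_def NV_def by simp_all
  have pN: "p * real NU = 8 * L * gU" "p * real NV = 8 * L * gV"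
    using L unfolding gU_def gV_def NU_def NV_def L_def by simp_all
  have "8 * L * 3 \<le> 8 * L * gU" "8 * L * 3 \<le> 8 * L * gV"
    using growth L by (intro mult_left_mono; simp)+
  then have expected: "24 * ln (real n) \<le> p * real NU" "24 * ln (real n) \<le> p * real NV"
    unfolding pN L_def by simp_all
  have "subset_prob ?X p (\<lambda>E. \<not> (\<forall>u<m. \<forall>u'<m. u \<noteq> u' \<longrightarrow> many_disjoint_paths E (2 * k + 2) r (Inl u) (Inl u')))
    \<le> subset_prob ?X p (\<lambda>E. \<not> min_degree_into E m (block NV 0) \<tau>0)
      + subset_prob ?X p (\<lambda>E. \<not> min_degree_into E m (block NV k) \<tau>0)
      + (\<Sum>j<2 * k - 1. subset_prob ?X p (\<lambda>E. \<not> expands E NU NV j (\<sigma> j) (\<tau> j)))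
      + real (card (avoid_configs m n s)) * (1 - p) ^ (\<sigma> (2 * k - 1) * \<sigma> 0)"
  proof (rule prob_not_linked_le[OF k NU_le NV_le p s_def[THEN meta_eq_to_obj_eq]])
    show "r \<le> real (Suc (nat \<lceil>r\<rceil>))" by linarith
  qed (use seq(1,2) in \<open>simp_all add: \<sigma>_def \<tau>_def \<tau>0_def\<close>)
  also have "\<dots> \<le> 1 / real n ^ 3 + 1 / real n ^ 3 + (\<Sum>j<2 * k - 1. 1 / real n ^ 3) + 1 / real n ^ 2"
  proof (intro add_mono sum_mono)
    have \<tau>0: "real \<tau>0 \<le> gV" unfolding \<tau>0_def using growth(2) by linarith
    have "p / (8 * L) \<le> 1 / 2" using p L by (simp add: field_simps)
    then have "real NV * (p / (8 * L)) \<le> real NV * (1 / 2)" by (intro mult_left_mono) auto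
    then have gV: "gV \<le> real NV / 2" unfolding gV_def NV_def L_def by (simp add: field_simps)
    have "subset_prob ?X p (\<lambda>E. \<not> min_degree_into E m (block NV i) \<tau>0) \<le> 1 / real n ^ 3"
      if "i \<le> k" for i
    proof (rule prob_not_min_degree_le)
      show "block NV i \<subseteq> {..<n}" using that by (intro block_subset_lessThan[OF _ NV_le]) simp
    qed (use \<tau>0 gV expected(2) \<open>NV \<le> n\<close> mn n p in \<open>auto simp: gV_def NV_def\<close>)
    then show "subset_prob ?X p (\<lambda>E. \<not> min_degree_into E m (block NV 0) \<tau>0) \<le> 1 / real n ^ 3"
      "subset_prob ?X p (\<lambda>E. \<not> min_degree_into E m (block NV k) \<tau>0) \<le> 1 / real n ^ 3"
      by auto
    fix j assume "j \<in> {..<2 * k - 1}"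
    define N where "N = (if even j then NU else NV)"
    have N: "real N = (if even j then real NU else real NV)" unfolding N_def by simp
    have card: "card (next_block NU NV j) = N" unfolding N_def next_block_def by simp
    have "(if even j then gU else gV) = p * real N / (8 * ln (real n))"
      unfolding N_def gU_def gV_def NU_def NV_def by simp
    then have "real (\<tau> j) \<le> p * real N / (8 * ln (real n)) * real (\<sigma> j)"
      using seq(4)[of j] unfolding \<sigma>_def \<tau>_def by simp
    then have "real (\<tau> j) \<le> p * real (\<sigma> j) * real (card (next_block NU NV j)) / (8 * ln (real n))"
      unfolding card by (simp add: mult_ac)
    moreover have "real (\<tau> j) \<le> real (card (next_block NU NV j)) / 2"
      using seq(3)[of j] unfolding card N \<tau>_def by simp
    moreover have "24 * ln (real n) \<le> p * real (card (next_block NU NV j))"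
      using expected unfolding card N_def by simp
    ultimately show "subset_prob ?X p (\<lambda>E. \<not> expands E NU NV j (\<sigma> j) (\<tau> j)) \<le> 1 / real n ^ 3"
      using \<open>j \<in> {..<2 * k - 1}\<close> seq(5)[of j] mn n p unfolding \<sigma>_def
      by (intro prob_not_expands_le[OF k _ NU_le NV_le]) auto
  next
    have "min ((gV / 4) ^ k * (gU / 4) ^ k) (min (real NU) (real NV) / 8) * (gV / 4)
        \<le> real (\<sigma> (2 * k - 1)) * real (\<sigma> 0)"
      unfolding \<sigma>_def by (rule layer_lb_product_ge[OF growth sizes k])
    then have "p * (min ((gV / 4) ^ k * (gU / 4) ^ k) (min (real NU) (real NV) / 8) * (gV / 4))
        \<le> p * real (\<sigma> (2 * k - 1) * \<sigma> 0)"
      using p by (intro mult_left_mono) auto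
    then have "(2 * real s + 6) * ln (real n + 1) \<le> p * real (\<sigma> (2 * k - 1) * \<sigma> 0)"
      using joining by (simp only: mult.assoc)
    then show "real (card (avoid_configs m n s)) * (1 - p) ^ (\<sigma> (2 * k - 1) * \<sigma> 0) \<le> 1 / real n ^ 2"
      using mn n p by (intro prob_no_joining_edges_le) auto
  qed
  also have "\<dots> \<le> 1 / real n" using failure_sum_le[OF k n] .
  finally show ?thesis .
qed

section \<open>The parameters of the theorem\<close>

lemma density_power_ge:
  fixes m n Lg :: real and k j :: nat
  assumes m: "1 \<le> m" "m \<le> n" and Lg: "1 \<le> Lg" and k: "1 \<le> k"
    and j: "(j = 2 \<and> jn = 1 \<and> jm = 1) \<or> (j = 2 * k + 2 \<and> jn = k + 1 \<and> jm = k)"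
  defines "dd \<equiv> 2 * real k + 1"
  defines "e \<equiv> (dd - 1) / (2 * dd)"
  defines "p1 \<equiv> Lg powr (1 / dd) / (m powr e * n powr e)"
  shows "n powr (1 / dd) \<le> p1 ^ j * n ^ (jn) * m ^ (jm)"
proof -
  have n: "1 \<le> n" using m by linarith
  have dpos: "0 < dd" unfolding dd_def by simp
  have p1pos: "0 < p1" unfolding p1_def using m n Lg by simp
  define a where "a = ln m"
  define b where "b = ln n"
  define l where "l = ln Lg"
  have a0: "0 \<le> a" "a \<le> b" unfolding a_def b_def using m by auto
  have l0: "0 \<le> l" unfolding l_def using Lg by simp
  have lnp1: "ln p1 = l / dd - e * a - e * b"
    unfolding p1_def a_def b_def l_def using m n Lg
    by (simp add: ln_div ln_mult ln_powr)
  have pos: "0 < p1 ^ j * n ^ (jn) * m ^ (jm)" using p1pos m n by simp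
  have lnR: "ln (p1 ^ j * n ^ (jn) * m ^ (jm)) = real j * ln p1 + real (jn) * b + real (jm) * a"
    unfolding a_def b_def using p1pos m n by (simp add: ln_mult ln_realpow)
  have lnL: "ln (n powr (1 / dd)) = b / dd" unfolding b_def using n by (simp add: ln_powr)
  have "b / dd \<le> real j * ln p1 + real (jn) * b + real (jm) * a"
    using j
  proof
    assume j2': "j = 2 \<and> jn = 1 \<and> jm = 1"
    then have j2: "j = 2" and jd: "jn = 1" "jm = 1" by auto
    have "real j * ln p1 + real (jn) * b + real (jm) * a - b / dd = 2 * l / dd + a / dd"
      unfolding j2 jd lnp1 e_def using dpos by (simp add: field_simps)
    moreover have "0 \<le> 2 * l / dd + a / dd" using l0 a0 dpos by simp
    ultimately show ?thesis by linarith
  next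
    assume jk': "j = 2 * k + 2 \<and> jn = k + 1 \<and> jm = k"
    then have jk: "j = 2 * k + 2" and jd: "jn = k + 1" "jm = k" by auto
    have "real j * ln p1 + real (jn) * b + real (jm) * a - b / dd
        = (2 * real k + 2) * l / dd + (b - a) * real k / dd"
    proof -
      have e': "e = real k / dd" unfolding e_def dd_def by (simp add: field_simps)
      show ?thesis unfolding jd jk lnp1 e' using dpos
        by (simp add: field_simps) (simp add: dd_def algebra_simps)
    qed
    moreover have "0 \<le> (2 * real k + 2) * l / dd + (b - a) * real k / dd" using l0 a0 dpos by simp
    ultimately show ?thesis by linarith
  qed
  then have "ln (n powr (1 / dd)) \<le> ln (p1 ^ j * n ^ (jn) * m ^ (jm))"
    unfolding lnL lnR .
  moreover have npos: "0 < n powr (1 / dd)" using n by simp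
  ultimately show ?thesis using ln_le_cancel_iff[OF npos pos] by blast
qed


lemma ln_2_ge_half: "1 / 2 \<le> ln (2::real)"
proof -
  have "ln (1 / 2 :: real) \<le> 1 / 2 - 1" by (rule ln_le_minus_one) simp
  then show ?thesis by (simp add: ln_div)
qed

lemma real_div_ge_half_quotient:
  fixes m k :: nat
  assumes "1 \<le> k" "2 * k \<le> m"
  shows "real m / (2 * real k) \<le> real (m div k)"
proof -
  have "real m < real k * real (m div k) + real k"
    using assms by (metis add_less_cancel_left div_mult_mod_eq mod_less_divisor mult.commute
        of_nat_add of_nat_less_iff of_nat_mult le_trans zero_less_one less_le_trans)
  then have "real m / real k - 1 < real (m div k)" using assms by (simp add: field_simps)
  moreover have "real m / (2 * real k) \<le> real m / real k - 1" using assms by (simp add: field_simps)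
  ultimately show ?thesis by linarith
qed

text \<open>The hypotheses of the theorem for one \<open>n\<close>, with \<open>d = 2 k + 1\<close>, together with the two
  inequalities \<open>ln_n_large\<close> and \<open>root_n_large\<close>, which hold for all large \<open>n\<close>.\<close>

locale density_regime =
  fixes d k m n :: nat and c0 C1 p1 :: real
  assumes d: "d = 2 * k + 1" and k: "1 \<le> k" and c0: "1 \<le> c0"
    and C1: "C1 = 2 ^ (10 * d) * c0"
    and p1: "p1 = log 2 (real m * real n) powr (1 / real d) /
      (real m powr ((real d - 1) / (2 * real d)) * real n powr ((real d - 1) / (2 * real d)))"
    and p1_m_le_p1_n: "p1 * real m \<le> p1 * real n" and log_n_pow4_le: "log 2 (real n) ^ 4 \<le> p1 * real m"
    and ln_n_large: "100 * real d ^ 2 * C1 \<le> ln (real n)"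
    and root_n_large: "C1 * (64 * real d) ^ (d + 2) * ln (real n) ^ (d + 2) \<le> real n powr (1 / real d)"
begin

lemma C1_ge_1: "1 \<le> C1"
proof -
  have "1 * 1 \<le> (2::real) ^ (10 * d) * c0" using c0 by (intro mult_mono) auto
  then show ?thesis unfolding C1 by simp
qed

lemma d_ge_3: "3 \<le> d"
  using d k by simp

lemma ln_n_ge: "100 * real d ^ 2 \<le> ln (real n)"
proof -
  have "100 * real d ^ 2 * 1 \<le> 100 * real d ^ 2 * C1" using C1_ge_1 by (intro mult_left_mono) auto
  then show ?thesis using ln_n_large by simp
qed

lemma ln_n_ge_1: "1 \<le> ln (real n)"
proof -
  have "1 \<le> real d ^ 2" using d_ge_3 by simp
  then show ?thesis using ln_n_ge by linarith
qed

lemma n_ge_3: "3 \<le> n"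
proof (rule ccontr)
  assume "\<not> 3 \<le> n"
  then have "real n \<le> 2" by simp
  moreover have "0 < real n" using ln_n_ge_1 by (cases n) auto
  ultimately have "ln (real n) \<le> ln 2" by simp
  then show False using ln_n_ge_1 ln_2_less_1 by linarith
qed

lemma log_n_bounds: "ln (real n) \<le> log 2 (real n)" "log 2 (real n) \<le> 2 * ln (real n)"
  using ln_n_ge_1 ln_2_less_1 ln_2_ge_half by (simp_all add: log_def field_simps)

lemma p1_pos: "0 < p1" and m_ge_1: "1 \<le> m" and m_le_n: "m \<le> n"
proof -
  have "1 \<le> log 2 (real n) ^ 4" using log_n_bounds ln_n_ge_1 by simp
  then have pm: "0 < p1 * real m" using log_n_pow4_le by linarith
  moreover have "0 \<le> p1" unfolding p1 by simp
  ultimately show p1: "0 < p1" and "1 \<le> m" by (auto simp: zero_less_mult_iff)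
  show "m \<le> n" using p1_m_le_p1_n p1 by simp
qed

lemma log_mn_ge_1: "1 \<le> log 2 (real m * real n)"
proof -
  have "1 * 3 \<le> real m * real n" using m_ge_1 n_ge_3 by (intro mult_mono) auto
  then show ?thesis by simp
qed

text \<open>In particular \<open>p1 \<le> n ^ (- 1 / 3)\<close> up to logarithmic factors, which makes \<open>C1 p1\<close> a probability.\<close>

lemma C1_p1_le_1: "C1 * p1 \<le> 1"
proof -
  define L where "L = ln (real n)"
  define Lg where "Lg = log 2 (real m * real n)"
  define e where "e = (real d - 1) / (2 * real d)"
  have L: "1 \<le> L" using ln_n_ge_1 unfolding L_def .
  have e3: "1 / 3 \<le> e" unfolding e_def using d_ge_3 by (simp add: field_simps)
  have "Lg \<le> log 2 (real n * real n)" unfolding Lg_def using m_ge_1 m_le_n n_ge_3 by simp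
  also have "\<dots> = 2 * log 2 (real n)" using n_ge_3 by (simp add: log_mult)
  finally have Lg: "Lg \<le> 4 * L" using log_n_bounds unfolding L_def by linarith
  have "p1 \<le> Lg / real n powr (1 / 3)"
  proof -
    have "Lg powr (1 / real d) \<le> Lg"
      using log_mn_ge_1 d_ge_3 powr_mono[of "1 / real d" 1 Lg] unfolding Lg_def by simp
    moreover have "1 \<le> real m powr e" using m_ge_1 e3 by (simp add: ge_one_powr_ge_zero)
    moreover have "real n powr (1 / 3) \<le> real n powr e" using e3 n_ge_3 by (intro powr_mono) auto
    ultimately have "Lg powr (1 / real d) / (real m powr e * real n powr e) \<le> Lg / (1 * real n powr (1 / 3))"
      using log_mn_ge_1 n_ge_3 unfolding Lg_def by (intro frac_le mult_mono) auto
    then show ?thesis unfolding p1 Lg_def e_def by simp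
  qed
  also have "\<dots> \<le> 4 * L / real n powr (1 / 3)" using Lg n_ge_3 by (intro divide_right_mono) auto
  finally have "C1 * p1 \<le> C1 * (4 * L / real n powr (1 / 3))" using C1_ge_1 by (intro mult_left_mono) auto
  also have "\<dots> \<le> 1"
  proof -
    have "64 * real d \<le> (64 * real d) ^ (d + 2)" by (rule self_le_power) (use d_ge_3 in auto)
    then have "4 \<le> (64 * real d) ^ (d + 2)" using d_ge_3 by linarith
    moreover have "L \<le> L ^ (d + 2)" using L by (intro self_le_power) auto
    ultimately have "4 * L \<le> (64 * real d) ^ (d + 2) * L ^ (d + 2)" using L by (intro mult_mono) auto
    then have "4 * C1 * L \<le> C1 * (64 * real d) ^ (d + 2) * L ^ (d + 2)"
      using C1_ge_1 by (simp add: mult.assoc mult_left_mono)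
    also have "\<dots> \<le> real n powr (1 / real d)" using root_n_large unfolding L_def .
    also have "\<dots> \<le> real n powr (1 / 3)" using d_ge_3 n_ge_3 by (intro powr_mono) (auto simp: field_simps)
    finally show ?thesis using n_ge_3 by (simp add: field_simps)
  qed
  finally show ?thesis .
qed

lemma ln_n_pow4_le: "ln (real n) ^ 4 \<le> p1 * real m"
proof -
  have "ln (real n) ^ 4 \<le> log 2 (real n) ^ 4" using log_n_bounds ln_n_ge_1 by (intro power_mono) auto
  also have "\<dots> \<le> p1 * real m" by (rule log_n_pow4_le)
  finally show ?thesis .
qed

lemma ln_n_pow4_le_m: "ln (real n) ^ 4 \<le> real m"
proof -
  have "ln (real n) ^ 4 \<le> p1 * real m" by (rule ln_n_pow4_le)
  also have "\<dots> \<le> 1 * real m"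
  proof (rule mult_right_mono)
    have "p1 * 1 \<le> p1 * C1" using C1_ge_1 p1_pos by (intro mult_left_mono) auto
    then show "p1 \<le> 1" using C1_p1_le_1 by (simp add: mult.commute)
  qed simp
  finally show ?thesis by simp
qed

definition edge_prob :: real where "edge_prob = C1 * p1"
definition forbidden :: nat where "forbidden = (2 * k + 1) * nat \<lceil>C1 * log 2 (real n)\<rceil>"
definition NU :: nat where "NU = m div k"
definition NV :: nat where "NV = n div (k + 1)"
definition gU :: real where "gU = edge_prob * real NU / (8 * ln (real n))"
definition gV :: real where "gV = edge_prob * real NV / (8 * ln (real n))"

lemma edge_prob_bounds: "0 \<le> edge_prob" "edge_prob \<le> 1"
  using C1_ge_1 p1_pos C1_p1_le_1 unfolding edge_prob_def by simp_all

lemma forbidden_le: "2 * real forbidden + 6 \<le> 8 * real d * C1 * ln (real n)"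
proof -
  define L where "L = ln (real n)"
  have CL: "1 \<le> C1 * L" using C1_ge_1 ln_n_ge_1 unfolding L_def by (metis mult_mono' mult_1 zero_le_one)
  have "0 \<le> C1 * log 2 (real n)" using C1_ge_1 log_n_bounds ln_n_ge_1 by simp
  then have "real (nat \<lceil>C1 * log 2 (real n)\<rceil>) \<le> C1 * log 2 (real n) + 1" by linarith
  also have "\<dots> \<le> 2 * C1 * L + 1" using log_n_bounds C1_ge_1 unfolding L_def by simp
  finally have "real forbidden \<le> real d * (2 * C1 * L + 1)"
    unfolding forbidden_def d[symmetric] by (simp add: mult_left_mono)
  then have "2 * real forbidden + 6 \<le> 4 * real d * (C1 * L) + (2 * real d + 6)"
    by (simp add: algebra_simps)
  moreover have "4 * real d * 1 \<le> 4 * real d * (C1 * L)" using CL by (intro mult_left_mono) auto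
  then have "2 * real d + 6 \<le> 4 * real d * (C1 * L)" using d_ge_3 by linarith
  ultimately show ?thesis unfolding L_def by (simp add: algebra_simps)
qed

lemma m_ge: "4 * k + 2 \<le> m"
proof -
  have "real d \<le> real d ^ 2" by (rule self_le_power) (use d_ge_3 in auto)
  then have "real (4 * k + 2) \<le> 100 * real d ^ 2" using d by simp
  also have "\<dots> \<le> ln (real n) ^ 4"
    using ln_n_ge ln_n_ge_1 self_le_power[of "ln (real n)" 4] by linarith
  finally show ?thesis using ln_n_pow4_le_m by linarith
qed

lemma block_sizes_ge: "real m / (2 * real d) \<le> real NU" "real n / (2 * real d) \<le> real NV"
proof -
  have m: "4 * k + 2 \<le> m" by (rule m_ge)
  have "real m / (2 * real d) \<le> real m / (2 * real k)" using k d by (intro divide_left_mono) auto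
  also have "\<dots> \<le> real NU" unfolding NU_def using m k by (intro real_div_ge_half_quotient) auto
  finally show "real m / (2 * real d) \<le> real NU" .
  have "real n / (2 * real d) \<le> real n / (2 * real (k + 1))" using k d by (intro divide_left_mono) auto
  also have "\<dots> \<le> real NV" unfolding NV_def using m m_le_n by (intro real_div_ge_half_quotient) auto
  finally show "real n / (2 * real d) \<le> real NV" .
qed

lemma block_sizes_ge_forbidden: "4 * real forbidden + 12 \<le> real NU" "4 * real forbidden + 12 \<le> real NV"
proof -
  define L where "L = ln (real n)"
  have "32 * real d ^ 2 * C1 * L \<le> L ^ 3 * L"
  proof (rule mult_right_mono)
    have "32 * real d ^ 2 * C1 \<le> 100 * real d ^ 2 * C1" using C1_ge_1 by simp
    also have "\<dots> \<le> L ^ 3" using ln_n_large ln_n_ge_1 self_le_power[of L 3] unfolding L_def by linarith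
    finally show "32 * real d ^ 2 * C1 \<le> L ^ 3" .
  qed (use ln_n_ge_1 L_def in simp)
  also have "\<dots> = L ^ 4" by (simp add: power_Suc2[symmetric])
  finally have "16 * real d * C1 * L \<le> L ^ 4 / (2 * real d)"
    using d_ge_3 by (simp add: field_simps power2_eq_square)
  also have "\<dots> \<le> real m / (2 * real d)" using ln_n_pow4_le_m unfolding L_def by (simp add: divide_right_mono)
  finally have "4 * real forbidden + 12 \<le> real m / (2 * real d)" using forbidden_le unfolding L_def by linarith
  moreover have "real m / (2 * real d) \<le> real n / (2 * real d)" using m_le_n by (simp add: divide_right_mono)
  ultimately show "4 * real forbidden + 12 \<le> real NU" "4 * real forbidden + 12 \<le> real NV"
    using block_sizes_ge by linarith+
qed

lemma growth_factors_ge_forbidden: "2 * real forbidden + 6 \<le> gU" "2 * real forbidden + 6 \<le> gV"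
proof -
  define L where "L = ln (real n)"
  have L: "1 \<le> L" using ln_n_ge_1 unfolding L_def .
  have factor: "8 * real d * C1 * L \<le> C1 * L ^ 3 / (16 * real d)"
  proof -
    have "real d \<le> real d ^ 2" by (rule self_le_power) (use d_ge_3 in auto)
    then have "12 * real d \<le> L" using ln_n_ge unfolding L_def by linarith
    then have "(12 * real d) ^ 2 \<le> L ^ 2" by (intro power_mono) auto
    then have "144 * real d ^ 2 \<le> L ^ 2" by (simp add: power_mult_distrib)
    then have "128 * real d ^ 2 \<le> L ^ 2" using zero_le_power2[of "real d"] by linarith
    then have "128 * real d ^ 2 * (C1 * L) \<le> L ^ 2 * (C1 * L)"
      using C1_ge_1 L by (intro mult_right_mono) auto
    then have "128 * real d ^ 2 * C1 * L \<le> C1 * L ^ 3" by (simp add: power_numeral_reduce algebra_simps)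
    then show ?thesis using d_ge_3 by (simp add: field_simps power2_eq_square)
  qed
  have growth: "C1 * L ^ 3 / (16 * real d) \<le> edge_prob * N / (8 * L)" if "real m / (2 * real d) \<le> N" for N
  proof -
    have "C1 * L ^ 4 \<le> C1 * (p1 * real m)"
      using ln_n_pow4_le C1_ge_1 unfolding L_def by (intro mult_left_mono) auto
    then have "C1 * L ^ 4 / (2 * real d) \<le> edge_prob * (real m / (2 * real d))"
      unfolding edge_prob_def using d_ge_3 by (simp add: field_simps)
    also have "\<dots> \<le> edge_prob * N" using that edge_prob_bounds by (intro mult_left_mono) auto
    finally have "C1 * L ^ 4 / (2 * real d) / (8 * L) \<le> edge_prob * N / (8 * L)"
      using L by (intro divide_right_mono) auto
    moreover have "C1 * L ^ 4 / (2 * real d) / (8 * L) = C1 * L ^ 3 / (16 * real d)"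
      using L d_ge_3 by (simp add: field_simps power_Suc2[symmetric] power_numeral_reduce)
    ultimately show ?thesis by simp
  qed
  have "real m / (2 * real d) \<le> real n / (2 * real d)" using m_le_n by (simp add: divide_right_mono)
  then have "real m / (2 * real d) \<le> real NV" using block_sizes_ge(2) by linarith
  then show "2 * real forbidden + 6 \<le> gU" "2 * real forbidden + 6 \<le> gV"
    using forbidden_le factor growth block_sizes_ge(1) unfolding gU_def gV_def L_def by fastforce+
qed

lemma joining_lhs_le: "(2 * real forbidden + 6) * ln (real n + 1) \<le> 16 * real d * C1 * ln (real n) ^ 2"
proof -
  have "real n * 3 \<le> real n * real n" using n_ge_3 by (intro mult_left_mono) auto
  then have "real n + 1 \<le> real n * real n" using n_ge_3 by linarith
  then have "ln (real n + 1) \<le> ln (real n * real n)" using n_ge_3 by simp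
  also have "\<dots> = 2 * ln (real n)" using n_ge_3 by (simp add: ln_mult)
  finally have "(2 * real forbidden + 6) * ln (real n + 1) \<le> (8 * real d * C1 * ln (real n)) * (2 * ln (real n))"
    using forbidden_le n_ge_3 C1_ge_1 ln_n_ge_1 by (intro mult_mono) auto
  then show ?thesis by (simp add: power2_eq_square algebra_simps)
qed

lemma root_n_ge: "(64 * real d) ^ 3 * ln (real n) ^ 3 \<le> real n powr (1 / real d)"
  "16 * real d * (64 * real d) ^ d * ln (real n) ^ (d + 2) \<le> real n powr (1 / real d)"
proof -
  define L where "L = ln (real n)"
  have L: "1 \<le> L" using ln_n_ge_1 unfolding L_def .
  have "1 * ((64 * real d) ^ (d + 2) * L ^ (d + 2)) \<le> C1 * ((64 * real d) ^ (d + 2) * L ^ (d + 2))"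
    using C1_ge_1 L by (intro mult_right_mono) auto
  also have "\<dots> \<le> real n powr (1 / real d)" using root_n_large unfolding L_def by (simp add: mult.assoc)
  finally have root_n_large': "(64 * real d) ^ (d + 2) * L ^ (d + 2) \<le> real n powr (1 / real d)" by simp
  have "(64 * real d) ^ 3 \<le> (64 * real d) ^ (d + 2)" by (rule power_increasing) (use d_ge_3 in auto)
  moreover have "L ^ 3 \<le> L ^ (d + 2)" by (rule power_increasing) (use d_ge_3 L in auto)
  ultimately have "(64 * real d) ^ 3 * L ^ 3 \<le> (64 * real d) ^ (d + 2) * L ^ (d + 2)"
    using L by (intro mult_mono) auto
  then show "(64 * real d) ^ 3 * ln (real n) ^ 3 \<le> real n powr (1 / real d)" using root_n_large' unfolding L_def by linarith
  have "16 * real d * (64 * real d) ^ d * L ^ (d + 2) \<le> (64 * real d) ^ 2 * (64 * real d) ^ d * L ^ (d + 2)"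
    using d_ge_3 L by (intro mult_right_mono) (auto simp: power2_eq_square)
  also have "\<dots> = (64 * real d) ^ (d + 2) * L ^ (d + 2)"
    by (simp only: power_add[of _ 2 d, folded add.commute[of d 2]])
  finally show "16 * real d * (64 * real d) ^ d * ln (real n) ^ (d + 2) \<le> real n powr (1 / real d)"
    using root_n_large' unfolding L_def by linarith
qed

lemma root_n_le_density:
  "real n powr (1 / real d) \<le> p1 ^ 2 * real n ^ 1 * real m ^ 1"
  "real n powr (1 / real d) \<le> p1 ^ (2 * k + 2) * real n ^ (k + 1) * real m ^ k"
proof -
  have dR: "real d = 2 * real k + 1" using d by simp
  have mR: "1 \<le> real m" "real m \<le> real n" using m_ge_1 m_le_n by auto
  show "real n powr (1 / real d) \<le> p1 ^ 2 * real n ^ 1 * real m ^ 1"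
    unfolding dR p1 by (rule density_power_ge[OF mR log_mn_ge_1 k]) simp
  show "real n powr (1 / real d) \<le> p1 ^ (2 * k + 2) * real n ^ (k + 1) * real m ^ k"
    unfolding dR p1 by (rule density_power_ge[OF mR log_mn_ge_1 k]) simp
qed

lemma joining_capped:
  "16 * real d * C1 * ln (real n) ^ 2 \<le> edge_prob * (min (real NU) (real NV) / 8) * (gV / 4)"
proof -
  define L where "L = ln (real n)"
  define X where "X = edge_prob * real n / (64 * real d * L)"
  have L: "1 \<le> L" using ln_n_ge_1 unfolding L_def .
  have "edge_prob * (real n / (2 * real d)) / (32 * L) \<le> edge_prob * real NV / (32 * L)"
    using block_sizes_ge(2) edge_prob_bounds L by (intro divide_right_mono mult_left_mono) auto
  then have X: "X \<le> gV / 4" unfolding X_def gV_def L_def using L d_ge_3 by (simp add: field_simps)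
  have "real m / (16 * real d) \<le> min (real NU) (real NV) / 8"
    using block_sizes_ge m_le_n d_ge_3 by (simp add: field_simps)
  then have "edge_prob * (real m / (16 * real d)) * X \<le> edge_prob * (min (real NU) (real NV) / 8) * (gV / 4)"
    using X edge_prob_bounds L unfolding X_def by (intro mult_mono) auto
  moreover have "edge_prob * (real m / (16 * real d)) * X
      = C1 ^ 2 * (p1 ^ 2 * real n ^ 1 * real m ^ 1) / (1024 * real d ^ 2 * L)"
    unfolding X_def edge_prob_def using L d_ge_3 by (simp add: field_simps power2_eq_square)
  moreover have "16 * real d * C1 * L ^ 2 \<le> C1 ^ 2 * (p1 ^ 2 * real n ^ 1 * real m ^ 1) / (1024 * real d ^ 2 * L)"
  proof -
    have "16384 * real d ^ 3 * L ^ 3 \<le> (64 * real d) ^ 3 * L ^ 3"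
      using L by (simp add: power_mult_distrib)
    also have "\<dots> \<le> p1 ^ 2 * real n ^ 1 * real m ^ 1"
      using root_n_ge(1) root_n_le_density(1) unfolding L_def by linarith
    finally have "C1 * (16384 * real d ^ 3 * L ^ 3) \<le> C1 * (p1 ^ 2 * real n ^ 1 * real m ^ 1)"
      using C1_ge_1 by (intro mult_left_mono) auto
    also have "\<dots> \<le> C1 ^ 2 * (p1 ^ 2 * real n ^ 1 * real m ^ 1)"
      using C1_ge_1 p1_pos m_ge_1 by (intro mult_right_mono) (auto simp: power2_eq_square)
    finally show ?thesis using L d_ge_3 by (simp add: field_simps power2_eq_square power3_eq_cube)
  qed
  ultimately show ?thesis unfolding L_def by linarith
qed

text \<open>The main term of the joining estimate: \<open>p (g / 4) ^ d\<close> with \<open>g \<approx> p n / (d log n)\<close> is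
  about \<open>(C1 p1) ^ (2 k + 2) n ^ (k + 1) m ^ k\<close>, which the choice of \<open>p1\<close> makes at least
  \<open>C1 n ^ (1 / d)\<close> up to logarithmic factors.\<close>

lemma joining_uncapped:
  "16 * real d * C1 * ln (real n) ^ 2 \<le> edge_prob * ((gV / 4) ^ k * (gU / 4) ^ k) * (gV / 4)"
proof -
  define L where "L = ln (real n)"
  define D where "D = 64 * real d * L"
  define X where "X = edge_prob * real n / D"
  define Y where "Y = edge_prob * real m / D"
  have L: "1 \<le> L" using ln_n_ge_1 unfolding L_def .
  have D: "0 < D" unfolding D_def using L d_ge_3 by simp
  have "edge_prob * (real n / (2 * real d)) / (32 * L) \<le> edge_prob * real NV / (32 * L)"
    using block_sizes_ge(2) edge_prob_bounds L by (intro divide_right_mono mult_left_mono) auto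
  then have X: "X \<le> gV / 4" unfolding X_def D_def gV_def L_def using L d_ge_3 by (simp add: field_simps)
  have "edge_prob * (real m / (2 * real d)) / (32 * L) \<le> edge_prob * real NU / (32 * L)"
    using block_sizes_ge(1) edge_prob_bounds L by (intro divide_right_mono mult_left_mono) auto
  then have Y: "Y \<le> gU / 4" unfolding Y_def D_def gU_def L_def using L d_ge_3 by (simp add: field_simps)
  have "edge_prob * (X ^ k * Y ^ k) * X \<le> edge_prob * ((gV / 4) ^ k * (gU / 4) ^ k) * (gV / 4)"
  proof -
    have "0 \<le> X" "0 \<le> Y" unfolding X_def Y_def using D edge_prob_bounds by auto
    then show ?thesis
      using X Y edge_prob_bounds by (intro mult_mono power_mono mult_nonneg_nonneg zero_le_power) auto
  qed
  moreover have "edge_prob * (X ^ k * Y ^ k) * X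
      = C1 ^ (2 * k + 2) * (p1 ^ (2 * k + 2) * real n ^ (k + 1) * real m ^ k) / D ^ d"
  proof -
    have "edge_prob * (X ^ k * Y ^ k) * X
        = (edge_prob * edge_prob ^ (k + 1) * edge_prob ^ k) * (real n ^ (k + 1) * real m ^ k) / (D ^ (k + 1) * D ^ k)"
      unfolding X_def Y_def by (simp add: power_divide power_mult_distrib field_simps)
    also have "edge_prob * edge_prob ^ (k + 1) * edge_prob ^ k = (C1 * p1) ^ (2 * k + 2)"
      unfolding edge_prob_def by (simp add: power_add[symmetric] mult_2)
    also have "D ^ (k + 1) * D ^ k = D ^ d" unfolding d by (simp add: power_add[symmetric] mult_2)
    finally show ?thesis by (simp add: power_mult_distrib mult_ac)
  qed
  moreover have "C1 * real n powr (1 / real d) \<le> C1 ^ (2 * k + 2) * (p1 ^ (2 * k + 2) * real n ^ (k + 1) * real m ^ k)"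
  proof -
    have "C1 * real n powr (1 / real d) \<le> C1 * (p1 ^ (2 * k + 2) * real n ^ (k + 1) * real m ^ k)"
      using root_n_le_density(2) C1_ge_1 by (intro mult_left_mono) auto
    also have "\<dots> \<le> C1 ^ (2 * k + 2) * (p1 ^ (2 * k + 2) * real n ^ (k + 1) * real m ^ k)"
      using C1_ge_1 p1_pos m_ge_1 by (intro mult_right_mono self_le_power) auto
    finally show ?thesis .
  qed
  moreover have "16 * real d * C1 * L ^ 2 \<le> C1 * real n powr (1 / real d) / D ^ d"
  proof -
    have "16 * real d * C1 * L ^ 2 = C1 * (16 * real d * (64 * real d) ^ d * L ^ (d + 2)) / D ^ d"
      unfolding D_def using L d_ge_3 by (simp add: power_mult_distrib power_add field_simps power2_eq_square)
    also have "\<dots> \<le> C1 * real n powr (1 / real d) / D ^ d"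
      using root_n_ge(2) C1_ge_1 D unfolding L_def by (intro divide_right_mono mult_left_mono) auto
    finally show ?thesis .
  qed
  ultimately show ?thesis unfolding L_def using D by (smt (verit) divide_right_mono zero_le_power)
qed

lemma prob_all_linked_ge:
  "1 - real n powr (-1) \<le> bip_prob m n (C1 * p1) (\<lambda>E. \<forall>u<m. \<forall>u'<m. u \<noteq> u' \<longrightarrow>
     many_disjoint_paths E (d + 1) (C1 * log 2 (real n)) (Inl u) (Inl u'))"
proof -
  let ?linked = "\<lambda>E. \<forall>u<m. \<forall>u'<m. u \<noteq> u' \<longrightarrow>
     many_disjoint_paths E (2 * k + 2) (C1 * log 2 (real n)) (Inl u) (Inl u')"
  have "(2 * real forbidden + 6) * ln (real n + 1)
      \<le> edge_prob * min ((gV / 4) ^ k * (gU / 4) ^ k) (min (real NU) (real NV) / 8) * (gV / 4)"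
    using joining_lhs_le joining_capped joining_uncapped by (simp add: min_def)
  then have "subset_prob ({..<m} \<times> {..<n}) edge_prob (\<lambda>E. \<not> ?linked E) \<le> 1 / real n"
    using growth_factors_ge_forbidden block_sizes_ge_forbidden
    unfolding gU_def gV_def NU_def NV_def forbidden_def
    using m_ge m_le_n by (intro prob_not_all_linked_le k n_ge_3 edge_prob_bounds) auto
  moreover have "bip_prob m n (C1 * p1) ?linked = 1 - subset_prob ({..<m} \<times> {..<n}) edge_prob (\<lambda>E. \<not> ?linked E)"
    unfolding bip_prob_eq_subset_prob edge_prob_def by (rule subset_prob_not) simp
  moreover have "real n powr (-1) = 1 / real n" using n_ge_3 by (simp add: powr_minus divide_inverse)
  ultimately show ?thesis using d by simp
qed

end

lemma mult_ln_power_le_powr: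
  fixes x b K :: real and a :: nat
  assumes x: "1 \<le> x" and b: "0 < b" and a: "1 \<le> a" and K: "0 \<le> K"
    and large: "K * (2 * real a / b) ^ a \<le> b / 2 * ln x"
  shows "K * ln x ^ a \<le> x powr b"
proof -
  define c where "c = b / (2 * real a)"
  have c: "0 < c" "c * real a = b / 2" unfolding c_def using a b by auto
  have "c * ln x = ln (x powr c)" using x by (simp add: ln_powr)
  also have "\<dots> \<le> x powr c" using x by (intro ln_bound) simp
  finally have "ln x \<le> x powr c / c" using c by (simp add: field_simps)
  then have "ln x ^ a \<le> (x powr c / c) ^ a" using x by (intro power_mono) auto
  also have "\<dots> = x powr (real a * c) / c ^ a" using x by (simp add: power_divide powr_power)
  also have "\<dots> = x powr (b / 2) * (2 * real a / b) ^ a"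
  proof -
    have ca: "real a * c = b / 2" using c(2) by (simp add: mult.commute)
    have "(2 * real a / b) ^ a = 1 / c ^ a" unfolding c_def by (simp add: power_divide)
    then show ?thesis unfolding ca by simp
  qed
  finally have "K * ln x ^ a \<le> x powr (b / 2) * (K * (2 * real a / b) ^ a)"
    using K by (simp add: mult_left_mono mult.left_commute)
  also have "\<dots> \<le> x powr (b / 2) * (b / 2 * ln x)" using large by (intro mult_left_mono) auto
  also have "b / 2 * ln x \<le> x powr (b / 2)"
    using x ln_bound[of "x powr (b / 2)"] by (simp add: ln_powr)
  then have "x powr (b / 2) * (b / 2 * ln x) \<le> x powr (b / 2) * x powr (b / 2)" by (intro mult_left_mono) auto
  also have "\<dots> = x powr b" by (simp add: powr_add[symmetric])
  finally show ?thesis .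
qed

lemma eventually_ln_ge: "\<forall>\<^sub>F n in sequentially. T \<le> ln (real n)"
  using filterlim_compose[OF ln_at_top filterlim_real_sequentially] by (simp add: filterlim_at_top)

lemma eventually_ln_power_le_powr:
  fixes b K :: real and a :: nat
  assumes "0 < b" "1 \<le> a" "0 \<le> K"
  shows "\<forall>\<^sub>F n in sequentially. K * ln (real n) ^ a \<le> real n powr b"
  using eventually_ln_ge[of "max 1 (2 / b * (K * (2 * real a / b) ^ a))"]
proof (rule eventually_mono)
  fix n assume n: "max 1 (2 / b * (K * (2 * real a / b) ^ a)) \<le> ln (real n)"
  then have "1 \<le> real n" by (cases n) auto
  moreover have "K * (2 * real a / b) ^ a \<le> b / 2 * ln (real n)" using n assms(1) by (simp add: field_simps)
  ultimately show "K * ln (real n) ^ a \<le> real n powr b"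
    using mult_ln_power_le_powr assms by blast
qed

theorem lemma7:
  fixes d :: nat and c0 :: real and m :: "nat \<Rightarrow> nat"
  assumes "odd d" and "d \<ge> 2" and "c0 \<ge> 1"
  assumes "\<forall>\<^sub>F n in at_top.
     (let p1 = (log 2 (real (m n) * real n)) powr (1 / real d) /
               ((real (m n)) powr ((real d - 1) / (2 * real d)) *
                (real n) powr ((real d - 1) / (2 * real d)))
      in p1 * real n \<ge> p1 * real (m n) \<and> p1 * real (m n) \<ge> (log 2 (real n)) ^ 4)"
  shows "\<exists>\<epsilon>>0. \<forall>\<^sub>F n in at_top.
     (let p1 = (log 2 (real (m n) * real n)) powr (1 / real d) /
               ((real (m n)) powr ((real d - 1) / (2 * real d)) *
                (real n) powr ((real d - 1) / (2 * real d)));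
          C1 = 2 ^ (10 * d) * c0
      in bip_prob (m n) n (C1 * p1)
           (\<lambda>E. \<forall>u<m n. \<forall>u'<m n. u \<noteq> u' \<longrightarrow>
                  many_disjoint_paths E (d + 1) (2 ^ (10 * d) * c0 * log 2 (real n)) (Inl u) (Inl u'))
         \<ge> 1 - (real n) powr (- \<epsilon>))"
proof -
  define k where "k = d div 2"
  have d: "d = 2 * k + 1" unfolding k_def using assms(1) by presburger
  have k: "1 \<le> k" using d assms(2) by simp
  define C1 :: real where "C1 = 2 ^ (10 * d) * c0"
  define p1 where "p1 n = log 2 (real (m n) * real n) powr (1 / real d) /
    (real (m n) powr ((real d - 1) / (2 * real d)) * real n powr ((real d - 1) / (2 * real d)))" for n
  have "\<forall>\<^sub>F n in at_top. 100 * real d ^ 2 * C1 \<le> ln (real n)" by (rule eventually_ln_ge)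
  moreover have "\<forall>\<^sub>F n in at_top. C1 * (64 * real d) ^ (d + 2) * ln (real n) ^ (d + 2) \<le> real n powr (1 / real d)"
    using assms(3) d by (intro eventually_ln_power_le_powr) (auto simp: C1_def)
  ultimately have "\<forall>\<^sub>F n in at_top. density_regime d k (m n) n c0 C1 (p1 n)"
    using assms(4) by eventually_elim (use d k assms(3) in \<open>auto simp: density_regime_def C1_def p1_def Let_def\<close>)
  then have "\<forall>\<^sub>F n in at_top. 1 - real n powr (-1) \<le> bip_prob (m n) n (C1 * p1 n)
      (\<lambda>E. \<forall>u<m n. \<forall>u'<m n. u \<noteq> u' \<longrightarrow> many_disjoint_paths E (d + 1) (C1 * log 2 (real n)) (Inl u) (Inl u'))"
    by (rule eventually_mono) (rule density_regime.prob_all_linked_ge)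
  then show ?thesis unfolding Let_def p1_def C1_def by (intro exI[of _ 1]) auto
qed

end
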